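(* Let $\mathbf{A}\in\mathbb{R}^{n\times d}$, $\mathbf{B}=[\mathbf{b}_1,\dots,\mathbf{b}_{d_B}]\in\mathbb{R}^{n\times d_B}$, $\mathbf{C}=[\mathbf{c}_1,\dots,\mathbf{c}_{n_C}]^{\rm T}\in\mathbb{R}^{n_C\times d}$, and let $k,r$ be integers with $1\le k\le\mathrm{rank}(\mathbf{B})$, $1\le r\le\mathrm{rank}(\mathbf{C})$. Let $S$ be an $l$-subset of $[d_B]$ with $0\le l\le k-1$ and $R$ a $t$-subset of $[n_C]$ with $0\le t\le r-1$. Then $$P_{k-l,r-t}(x;\mathbf{Q}_S\mathbf{A}\mathbf{P}_R,\mathbf{Q}_S\mathbf{B},\mathbf{C}\mathbf{P}_R)=\frac1{k-l}\sum_{i:\|\mathbf{Q}_S\mathbf{b}_i\|\ne0}\|\mathbf{Q}_S\mathbf{b}_i\|^2\,P_{k-l-1,r-t}(x;\mathbf{Q}_{S\cup\{i\}}\mathbf{A}\mathbf{P}_R,\mathbf{Q}_{S\cup\{i\}}\mathbf{B},\mathbf{C}\mathbf{P}_R)$$ and $$P_{k-l,r-t}(x;\mathbf{Q}_S\mathbf{A}\mathbf{P}_R,\mathbf{Q}_S\mathbf{B},\mathbf{C}\mathbf{P}_R)=\frac1{r-t}\sum_{i:\|\mathbf{c}_i^{\rm T}\mathbf{P}_R\|\ne0}\|\mathbf{c}_i^{\rm T}\mathbf{P}_R\|^2\,P_{k-l,r-t-1}(x;\mathbf{Q}_S\mathbf{A}\mathbf{P}_{R\cup\{i\}},\mathb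f{Q}_S\mathbf{B},\mathbf{C}\mathbf{P}_{R\cup\{i\}}).$$
   Context: Notation: $\mathbf{M}_{R,S}$, $\mathbf{M}_{:,S}$, $\mathbf{M}_{R,:}$ are submatrices; $\mathbf{M}^\dagger$ Moore–Penrose pseudoinverse with $\mathbf{M}_{R,S}^\dagger:=(\mathbf{M}_{R,S})^\dagger$; empty determinants are $1$ and $\mathbf{M}_{:,\emptyset}\mathbf{M}_{:,\emptyset}^\dagger$, $\mathbf{M}_{\emptyset,:}^\dagger\mathbf{M}_{\emptyset,:}$ are zero. $\mathbf{Q}_S=\mathbf{I}_n-\mathbf{B}_{:,S}\mathbf{B}_{:,S}^\dagger$ and $\mathbf{P}_R=\mathbf{I}_d-\mathbf{C}_{R,:}^\dagger\mathbf{C}_{R,:}$ (always formed from the original $\mathbf{B},\mathbf{C}$). For general $\mathbf{A}'\in\mathbb{R}^{n\times d}$, $\mathbf{B}'\in\mathbb{R}^{n\times d_B}$, $\mathbf{C}'\in\mathbb{R}^{n_C\times d}$: $p_{T,W}(x;\mathbf{A}',\mathbf{B}',\mathbf{C}')=\det[x\mathbf{I}_d-(\mathbf{Q}'_T\mathbf{A}'\mathbf{P}'_W)^{\rm T}(\mathbf{Q}'_T\mathbf{A}'\mathbf{P}'_W)]$ with $\mathbf{Q}'_T=\mathbf{I}_n-\mathbf{B}'_{:,T}\mathbf{B}'^\dagger_{:,T}$, $\mathbf{P}'_W=\mathbf{I}_d-\mathbf{C}'^\dagger_{W,:}\mathbf{C}'_{W,:}$, and $P_{k,r}(x;\mathbf{A}',\mathbf{B}',\mathbf{C}')=\sum_{W\subset[n_C],|W|=r}\sum_{T\subset[d_B],|T|=k}\det[\mathbf{C}'_{W,:}\mathbf{C}'^{\rm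 T}_{W,:}]\det[\mathbf{B}'^{\rm T}_{:,T}\mathbf{B}'_{:,T}]\,p_{T,W}(x;\mathbf{A}',\mathbf{B}',\mathbf{C}')$. *)

theory Defs
  imports "Jordan_Normal_Form.Char_Poly" "Jordan_Normal_Form.DL_Rank" "Jordan_Normal_Form.DL_Submatrix"
begin

text \<open>Matrices are Jordan_Normal_Form matrices of type real mat; index sets [m] are {0..<m}
  (0-based). Columns of B are col B i, rows of C are row C i.\<close>

definition pinv :: "real mat \<Rightarrow> real mat" where
  "pinv M = (THE X. X \<in> carrier_mat (dim_col M) (dim_row M) \<and>
      M * X * M = M \<and> X * M * X = X \<and>
      transpose_mat (M * X) = M * X \<and> transpose_mat (X * M) = X * M)"

definition cols_sub :: "real mat \<Rightarrow> nat set \<Rightarrow> real mat" where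
  "cols_sub M S = submatrix M {0..<dim_row M} S"

definition rows_sub :: "real mat \<Rightarrow> nat set \<Rightarrow> real mat" where
  "rows_sub M R = submatrix M R {0..<dim_col M}"

definition Qproj :: "real mat \<Rightarrow> nat set \<Rightarrow> real mat" where
  "Qproj B T = 1\<^sub>m (dim_row B) - cols_sub B T * pinv (cols_sub B T)"

definition Pproj :: "real mat \<Rightarrow> nat set \<Rightarrow> real mat" where
  "Pproj C W = 1\<^sub>m (dim_col C) - pinv (rows_sub C W) * rows_sub C W"

definition pTW :: "nat set \<Rightarrow> nat set \<Rightarrow> real mat \<Rightarrow> real mat \<Rightarrow> real mat \<Rightarrow> real poly" where
  "pTW T W A' B' C' =
     (let M = Qproj B' T * A' * Pproj C' W in char_poly (transpose_mat M * M))"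

definition Pkr :: "nat \<Rightarrow> nat \<Rightarrow> real mat \<Rightarrow> real mat \<Rightarrow> real mat \<Rightarrow> real poly" where
  "Pkr k r A' B' C' =
     (\<Sum>W | W \<subseteq> {0..<dim_row C'} \<and> card W = r.
       \<Sum>T | T \<subseteq> {0..<dim_col B'} \<and> card T = k.
         Polynomial.smult (det (rows_sub C' W * transpose_mat (rows_sub C' W)) *
                det (transpose_mat (cols_sub B' T) * cols_sub B' T))
               (pTW T W A' B' C'))"

definition vnorm :: "real vec \<Rightarrow> real" where
  "vnorm v = sqrt (v \<bullet> v)"

definition mrank :: "real mat \<Rightarrow> nat" where
  "mrank M = vec_space.rank (dim_row M) M"

end

theory Submission
  imports Defs
begin

(* Both identities come from one counting argument.  Deflating by Q_S and P_R only shifts the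
   index sets, p_{T,W}(Q_S A P_R, Q_S B, C P_R) = p_{S \<union> T, R \<union> W}(A, B, C), because the
   projector for the columns T of Q_S B composed with Q_S is Q_{S \<union> T} (dually for P_R).  So
   P_{k,r} is a sum over k-sets T of the Gram determinant of the columns T of Q_S B times a
   quantity depending only on S \<union> T.  Counting the pairs (i, T) with i \<in> T turns k times this
   sum into a sum over i; eliminating the column Q_S b_i from the others factors the Gram
   determinant as |Q_S b_i|^2 times the Gram determinant of the columns T - {i} of
   Q_{S \<union> {i}} B, and columns with Q_S b_i = 0 contribute nothing.  The row identity is the same
   argument for the transpose of C. *)

lemma scalar_prod_self_nonneg: "0 \<le> (v :: real vec) \<bullet> v"
  using conjugate_square_ge_0_vec[of v] by simp

lemma scalar_prod_self_eq_0_iff: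
  "(v :: real vec) \<in> carrier_vec n \<Longrightarrow> v \<bullet> v = 0 \<longleftrightarrow> v = 0\<^sub>v n"
  using conjugate_square_eq_0_vec[of v n] by simp

lemma vnorm_power2: "(vnorm v)\<^sup>2 = v \<bullet> v"
  unfolding vnorm_def using scalar_prod_self_nonneg[of v] by simp

lemma vnorm_eq_0_iff: "v \<in> carrier_vec n \<Longrightarrow> vnorm v = 0 \<longleftrightarrow> v = 0\<^sub>v n"
  unfolding vnorm_def using scalar_prod_self_eq_0_iff by simp

lemma mult_unit_vec_eq_col:
  "(A :: 'a :: comm_ring_1 mat) \<in> carrier_mat n m \<Longrightarrow> j < m \<Longrightarrow> A *\<^sub>v unit_vec m j = col A j"
  by (intro eq_vecI) auto

lemma col_in_carrier: "A \<in> carrier_mat n m \<Longrightarrow> col A j \<in> carrier_vec n"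
  by (simp add: carrier_vecI)

lemma vec_eq_add_imp_eq_minus:
  fixes a b c :: "'a :: ab_group_add vec"
  assumes "a = b + c" and "a \<in> carrier_vec n" "b \<in> carrier_vec n" "c \<in> carrier_vec n"
  shows "b = a - c"
  using assms by (intro eq_vecI) auto

lemma eq_mat_on_vecI:
  fixes A B :: "'a :: comm_ring_1 mat"
  assumes A: "A \<in> carrier_mat n m" and B: "B \<in> carrier_mat n m"
    and eq: "\<And>x. x \<in> carrier_vec m \<Longrightarrow> A *\<^sub>v x = B *\<^sub>v x"
  shows "A = B"
proof (rule mat_col_eqI)
  fix j assume "j < dim_col B"
  then have "j < m" using B by simp
  then show "col A j = col B j"
    using eq[of "unit_vec m j"] mult_unit_vec_eq_col[OF A] mult_unit_vec_eq_col[OF B] by simp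
qed (use A B in auto)

section \<open>Orthogonal projections onto complements of column spans\<close>

definition supported_on :: "'a :: zero vec \<Rightarrow> nat set \<Rightarrow> bool" where
  "supported_on y X \<longleftrightarrow> (\<forall>j < dim_vec y. j \<notin> X \<longrightarrow> y $ j = 0)"

(* The paper's projector Q_X, characterised without reference to the pseudoinverse. *)

definition orth_compl_proj :: "real mat \<Rightarrow> nat set \<Rightarrow> real mat \<Rightarrow> bool" where
  "orth_compl_proj B X P \<longleftrightarrow> P \<in> carrier_mat (dim_row B) (dim_row B) \<and>
     (\<forall>v \<in> carrier_vec (dim_row B).
        (\<forall>j \<in> X. j < dim_col B \<longrightarrow> col B j \<bullet> (P *\<^sub>v v) = 0) \<and>
        (\<exists>y \<in> carrier_vec (dim_col B). supported_on y X \<and> v - P *\<^sub>v v = B *\<^sub>v y))"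

lemma orth_compl_projI:
  assumes "B \<in> carrier_mat n d" and "P \<in> carrier_mat n n"
    and "\<And>v j. v \<in> carrier_vec n \<Longrightarrow> j \<in> X \<Longrightarrow> j < d \<Longrightarrow> col B j \<bullet> (P *\<^sub>v v) = 0"
    and "\<And>v. v \<in> carrier_vec n \<Longrightarrow>
           \<exists>y \<in> carrier_vec d. supported_on y X \<and> v - P *\<^sub>v v = B *\<^sub>v y"
  shows "orth_compl_proj B X P"
  using assms unfolding orth_compl_proj_def by auto

lemma orth_compl_projD:
  assumes "orth_compl_proj B X P" and "B \<in> carrier_mat n d"
  shows orth_compl_proj_carrier: "P \<in> carrier_mat n n"
    and orth_compl_proj_orth:
      "\<And>v j. v \<in> carrier_vec n \<Longrightarrow> j \<in> X \<Longrightarrow> j < d \<Longrightarrow> col B j \<bullet> (P *\<^sub>v v) = 0"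
    and orth_compl_proj_range:
      "\<And>v. v \<in> carrier_vec n \<Longrightarrow>
         \<exists>y \<in> carrier_vec d. supported_on y X \<and> v - P *\<^sub>v v = B *\<^sub>v y"
    and orth_compl_proj_decomp:
      "\<And>v. v \<in> carrier_vec n \<Longrightarrow>
         \<exists>y \<in> carrier_vec d. supported_on y X \<and> v = P *\<^sub>v v + B *\<^sub>v y"
proof -
  show P: "P \<in> carrier_mat n n" using assms unfolding orth_compl_proj_def by auto
  show "\<And>v j. v \<in> carrier_vec n \<Longrightarrow> j \<in> X \<Longrightarrow> j < d \<Longrightarrow> col B j \<bullet> (P *\<^sub>v v) = 0"
    using assms unfolding orth_compl_proj_def by auto
  show "\<And>v. v \<in> carrier_vec n \<Longrightarrow>
      \<exists>y \<in> carrier_vec d. supported_on y X \<and> v - P *\<^sub>v v = B *\<^sub>v y"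
    using assms unfolding orth_compl_proj_def by auto
  fix v :: "real vec" assume v: "v \<in> carrier_vec n"
  then obtain y where y: "y \<in> carrier_vec d" "supported_on y X" "v - P *\<^sub>v v = B *\<^sub>v y"
    using assms unfolding orth_compl_proj_def by auto
  have "v = P *\<^sub>v v + (v - P *\<^sub>v v)" using v P by (intro eq_vecI) auto
  with y show "\<exists>y \<in> carrier_vec d. supported_on y X \<and> v = P *\<^sub>v v + B *\<^sub>v y" by auto
qed

lemma supported_mult_vec_orth:
  assumes B: "B \<in> carrier_mat n d" and y: "y \<in> carrier_vec d" "supported_on y X"
    and w: "w \<in> carrier_vec n" and orth: "\<And>j. j \<in> X \<Longrightarrow> j < d \<Longrightarrow> col B j \<bullet> w = 0"
  shows "(B *\<^sub>v y) \<bullet> w = (0 :: real)"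
proof -
  have "(B *\<^sub>v y) \<bullet> w = (transpose_mat B *\<^sub>v w) \<bullet> y"
    using comm_scalar_prod[of "B *\<^sub>v y" n w] transpose_vec_mult_scalar[OF B y(1) w] B y w by simp
  also have "\<dots> = (\<Sum>j\<in>{0..<d}. (col B j \<bullet> w) * y $ j)" using B y w by (simp add: scalar_prod_def)
  also have "\<dots> = 0" using orth y unfolding supported_on_def by (intro sum.neutral) auto
  finally show ?thesis .
qed

lemma orth_compl_proj_inner:
  assumes P: "orth_compl_proj B X P" and B: "B \<in> carrier_mat n d"
    and v: "v \<in> carrier_vec n" and w: "w \<in> carrier_vec n"
  shows "(P *\<^sub>v v) \<bullet> w = (P *\<^sub>v v) \<bullet> (P *\<^sub>v w)"
proof -
  have Pc: "P \<in> carrier_mat n n" by (rule orth_compl_proj_carrier[OF P B])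
  obtain y where y: "y \<in> carrier_vec d" "supported_on y X" and wy: "w = P *\<^sub>v w + B *\<^sub>v y"
    using orth_compl_proj_decomp[OF P B w] by blast
  have "(B *\<^sub>v y) \<bullet> (P *\<^sub>v v) = 0"
    using supported_mult_vec_orth[OF B y] orth_compl_proj_orth[OF P B v] Pc v by simp
  then have "(P *\<^sub>v v) \<bullet> (B *\<^sub>v y) = 0" using comm_scalar_prod[of "B *\<^sub>v y" n] B y Pc v by simp
  then show ?thesis
    using scalar_prod_add_distrib[of "P *\<^sub>v v" n "P *\<^sub>v w" "B *\<^sub>v y"] Pc B v w y
    by (subst wy) simp
qed

lemma orth_compl_proj_self_adjoint:
  assumes P: "orth_compl_proj B X P" and B: "B \<in> carrier_mat n d"
    and v: "v \<in> carrier_vec n" and w: "w \<in> carrier_vec n"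
  shows "(P *\<^sub>v v) \<bullet> w = v \<bullet> (P *\<^sub>v w)"
proof -
  have Pc: "P \<in> carrier_mat n n" by (rule orth_compl_proj_carrier[OF P B])
  have "(P *\<^sub>v v) \<bullet> w = (P *\<^sub>v w) \<bullet> (P *\<^sub>v v)"
    using orth_compl_proj_inner[OF P B v w] comm_scalar_prod[of "P *\<^sub>v v" n] Pc v w by simp
  also have "\<dots> = (P *\<^sub>v w) \<bullet> v" using orth_compl_proj_inner[OF P B w v] by simp
  also have "\<dots> = v \<bullet> (P *\<^sub>v w)" using comm_scalar_prod[of "P *\<^sub>v w" n] Pc v w by simp
  finally show ?thesis .
qed

lemma orth_compl_proj_symmetric:
  assumes P: "orth_compl_proj B X P" and B: "B \<in> carrier_mat n d"
  shows "transpose_mat P = P"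
proof -
  have Pc: "P \<in> carrier_mat n n" by (rule orth_compl_proj_carrier[OF P B])
  have "P $$ (j, i) = P $$ (i, j)" if "i < n" "j < n" for i j
  proof -
    have "P $$ (j, i) = unit_vec n j \<bullet> (P *\<^sub>v unit_vec n i)"
      using that Pc mult_unit_vec_eq_col[OF Pc] by simp
    also have "\<dots> = (P *\<^sub>v unit_vec n j) \<bullet> unit_vec n i"
      using orth_compl_proj_self_adjoint[OF P B] by simp
    also have "\<dots> = P $$ (i, j)" using that Pc mult_unit_vec_eq_col[OF Pc] by simp
    finally show ?thesis .
  qed
  with Pc show ?thesis by (intro eq_matI) auto
qed

lemma orth_compl_proj_kills_cols:
  assumes P: "orth_compl_proj B X P" and B: "B \<in> carrier_mat n d" and j: "j \<in> X" "j < d"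
  shows "P *\<^sub>v col B j = 0\<^sub>v n"
proof -
  have Pc: "P \<in> carrier_mat n n" by (rule orth_compl_proj_carrier[OF P B])
  have c: "col B j \<in> carrier_vec n" using B by (rule col_in_carrier)
  have "(P *\<^sub>v col B j) \<bullet> (P *\<^sub>v col B j) = col B j \<bullet> (P *\<^sub>v col B j)"
    using orth_compl_proj_inner[OF P B c c] orth_compl_proj_self_adjoint[OF P B c c] by simp
  also have "\<dots> = 0" using orth_compl_proj_orth[OF P B c j] .
  finally show ?thesis using scalar_prod_self_eq_0_iff[of _ n] Pc c by simp
qed

lemma orth_compl_proj_unique:
  assumes B: "B \<in> carrier_mat n d" and P: "orth_compl_proj B X P" and P': "orth_compl_proj B X P'"
  shows "P = P'"
proof (rule eq_mat_on_vecI)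
  show Pc: "P \<in> carrier_mat n n" and P'c: "P' \<in> carrier_mat n n"
    using orth_compl_proj_carrier[OF P B] orth_compl_proj_carrier[OF P' B] .
  fix v :: "real vec" assume v: "v \<in> carrier_vec n"
  obtain y where y: "y \<in> carrier_vec d" "supported_on y X" and vy: "v = P *\<^sub>v v + B *\<^sub>v y"
    using orth_compl_proj_decomp[OF P B v] by blast
  obtain y' where y': "y' \<in> carrier_vec d" "supported_on y' X" and vy': "v = P' *\<^sub>v v + B *\<^sub>v y'"
    using orth_compl_proj_decomp[OF P' B v] by blast
  define z where "z = P *\<^sub>v v - P' *\<^sub>v v"
  have zc: "z \<in> carrier_vec n" unfolding z_def using Pc P'c v by simp
  have "B *\<^sub>v (y' - y) = B *\<^sub>v y' - B *\<^sub>v y" by (rule mult_minus_distrib_mat_vec[OF B y'(1) y(1)])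
  also have "\<dots> = z"
  proof (intro eq_vecI)
    fix i assume "i < dim_vec z"
    then have i: "i < n" using zc by simp
    show "(B *\<^sub>v y' - B *\<^sub>v y) $ i = z $ i"
      using arg_cong[OF vy, of "\<lambda>x. x $ i"] arg_cong[OF vy', of "\<lambda>x. x $ i"] i B Pc P'c v
      unfolding z_def by simp
  qed (use zc B in simp)
  finally have zB: "z = B *\<^sub>v (y' - y)" by simp
  have "supported_on (y' - y) X" using y y' unfolding supported_on_def by auto
  moreover have "col B j \<bullet> z = 0" if "j \<in> X" "j < d" for j
    using orth_compl_proj_orth[OF P B v that] orth_compl_proj_orth[OF P' B v that]
      scalar_prod_minus_distrib[of "col B j" n "P *\<^sub>v v" "P' *\<^sub>v v"] Pc P'c v B
    unfolding z_def by (simp add: col_in_carrier)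
  ultimately have "z \<bullet> z = 0"
    using supported_mult_vec_orth[OF B _ _ zc] zB y y' by simp
  then have "z = 0\<^sub>v n" using scalar_prod_self_eq_0_iff[OF zc] by simp
  show "P *\<^sub>v v = P' *\<^sub>v v"
  proof (rule eq_vecI)
    fix i assume "i < dim_vec (P' *\<^sub>v v)"
    then have "i < n" using P'c by simp
    then have "z $ i = 0" using \<open>z = 0\<^sub>v n\<close> by simp
    with \<open>i < n\<close> show "(P *\<^sub>v v) $ i = (P' *\<^sub>v v) $ i" using Pc P'c v unfolding z_def by simp
  qed (use Pc P'c in simp)
qed

lemma orth_compl_proj_one:
  assumes B: "B \<in> carrier_mat n d" and zero: "\<And>j. j \<in> X \<Longrightarrow> j < d \<Longrightarrow> col B j = 0\<^sub>v n"
  shows "orth_compl_proj B X (1\<^sub>m n)"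
proof (rule orth_compl_projI[OF B])
  fix v :: "real vec" and j assume "v \<in> carrier_vec n" "j \<in> X" "j < d"
  then show "col B j \<bullet> (1\<^sub>m n *\<^sub>v v) = 0" using zero by simp
next
  fix v :: "real vec" assume v: "v \<in> carrier_vec n"
  have "v - 1\<^sub>m n *\<^sub>v v = B *\<^sub>v 0\<^sub>v d" using v B by (intro eq_vecI) auto
  then show "\<exists>y \<in> carrier_vec d. supported_on y X \<and> v - 1\<^sub>m n *\<^sub>v v = B *\<^sub>v y"
    unfolding supported_on_def by (intro bexI[of _ "0\<^sub>v d"]) auto
qed simp

definition vec_compl_proj :: "real vec \<Rightarrow> real mat" where
  "vec_compl_proj u = 1\<^sub>m (dim_vec u) -
     (1 / (u \<bullet> u)) \<cdot>\<^sub>m mat (dim_vec u) (dim_vec u) (\<lambda>(a, b). u $ a * u $ b)"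

lemma vec_compl_proj_carrier: "u \<in> carrier_vec n \<Longrightarrow> vec_compl_proj u \<in> carrier_mat n n"
  unfolding vec_compl_proj_def by auto

lemma vec_compl_proj_mult_vec:
  assumes u: "u \<in> carrier_vec n" and x: "x \<in> carrier_vec n"
  shows "vec_compl_proj u *\<^sub>v x = x - ((u \<bullet> x) / (u \<bullet> u)) \<cdot>\<^sub>v u"
proof (rule eq_vecI)
  fix i assume "i < dim_vec (x - ((u \<bullet> x) / (u \<bullet> u)) \<cdot>\<^sub>v u)"
  then have i: "i < n" using x u by simp
  have "(vec_compl_proj u *\<^sub>v x) $ i =
      (\<Sum>j\<in>{0..<n}. ((if i = j then 1 else 0) - (1 / (u \<bullet> u)) * (u $ i * u $ j)) * x $ j)"
    using i u x unfolding vec_compl_proj_def by (simp add: scalar_prod_def)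
  also have "\<dots> = (\<Sum>j\<in>{0..<n}. (if i = j then 1 else 0) * x $ j)
      - (\<Sum>j\<in>{0..<n}. (1 / (u \<bullet> u)) * u $ i * (u $ j * x $ j))"
    by (simp only: left_diff_distrib sum_subtractf mult.assoc)
  also have "(\<Sum>j\<in>{0..<n}. (if i = j then 1 else 0) * x $ j) = (\<Sum>j\<in>{0..<n}. if i = j then x $ j else 0)"
    by (intro sum.cong) auto
  also have "\<dots> = x $ i" using i by simp
  also have "(\<Sum>j\<in>{0..<n}. (1 / (u \<bullet> u)) * u $ i * (u $ j * x $ j)) = (1 / (u \<bullet> u)) * u $ i * (u \<bullet> x)"
    using x by (simp only: sum_distrib_left[symmetric]) (simp add: scalar_prod_def)
  also have "x $ i - (1 / (u \<bullet> u)) * u $ i * (u \<bullet> x) = (x - ((u \<bullet> x) / (u \<bullet> u)) \<cdot>\<^sub>v u) $ i"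
    using i u x by simp
  finally show "(vec_compl_proj u *\<^sub>v x) $ i = (x - ((u \<bullet> x) / (u \<bullet> u)) \<cdot>\<^sub>v u) $ i" .
qed (use vec_compl_proj_carrier[OF u] u x in auto)

lemma orth_compl_proj_single_col:
  assumes B: "B \<in> carrier_mat n d" and i: "i < d" and nz: "col B i \<noteq> 0\<^sub>v n"
  shows "orth_compl_proj B {i} (vec_compl_proj (col B i))"
proof -
  define u where "u = col B i"
  have u: "u \<in> carrier_vec n" unfolding u_def using B by (rule col_in_carrier)
  have uu: "u \<bullet> u \<noteq> 0" using scalar_prod_self_eq_0_iff[OF u] nz unfolding u_def by simp
  show ?thesis unfolding u_def[symmetric]
  proof (rule orth_compl_projI[OF B vec_compl_proj_carrier[OF u]])
    fix v :: "real vec" and j assume v: "v \<in> carrier_vec n" and "j \<in> {i}"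
    then have "col B j = u" unfolding u_def by simp
    moreover have "u \<bullet> (v - ((u \<bullet> v) / (u \<bullet> u)) \<cdot>\<^sub>v u) = u \<bullet> v - ((u \<bullet> v) / (u \<bullet> u)) * (u \<bullet> u)"
      using u v by (subst scalar_prod_minus_distrib[of _ n]) auto
    moreover have "\<dots> = 0" using uu by simp
    ultimately show "col B j \<bullet> (vec_compl_proj u *\<^sub>v v) = 0"
      using vec_compl_proj_mult_vec[OF u v] by simp
  next
    fix v :: "real vec" assume v: "v \<in> carrier_vec n"
    define a where "a = (u \<bullet> v) / (u \<bullet> u)"
    have "B *\<^sub>v (a \<cdot>\<^sub>v unit_vec d i) = a \<cdot>\<^sub>v u"
      unfolding mult_mat_vec[OF B unit_vec_carrier] mult_unit_vec_eq_col[OF B i] u_def ..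
    then have "v - vec_compl_proj u *\<^sub>v v = B *\<^sub>v (a \<cdot>\<^sub>v unit_vec d i)"
      unfolding vec_compl_proj_mult_vec[OF u v] a_def[symmetric] using v u by (intro eq_vecI) auto
    then show "\<exists>y \<in> carrier_vec d. supported_on y {i} \<and> v - vec_compl_proj u *\<^sub>v v = B *\<^sub>v y"
      unfolding supported_on_def by (intro bexI[of _ "a \<cdot>\<^sub>v unit_vec d i"]) (auto simp: unit_vec_def)
  qed
qed

lemma orth_compl_proj_mult_decomp:
  assumes B: "B \<in> carrier_mat n d" and Q: "orth_compl_proj B X Q"
    and Q': "orth_compl_proj (Q * B) Y Q'" and v: "v \<in> carrier_vec n"
  shows "\<exists>y \<in> carrier_vec d. supported_on y Y \<and> Q' *\<^sub>v (Q *\<^sub>v v) = Q *\<^sub>v v - Q *\<^sub>v (B *\<^sub>v y)"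
proof -
  have Qc: "Q \<in> carrier_mat n n" by (rule orth_compl_proj_carrier[OF Q B])
  have QB: "Q * B \<in> carrier_mat n d" using Qc B by simp
  have Q'c: "Q' \<in> carrier_mat n n" by (rule orth_compl_proj_carrier[OF Q' QB])
  obtain y where y: "y \<in> carrier_vec d" "supported_on y Y"
    and vy: "Q *\<^sub>v v = Q' *\<^sub>v (Q *\<^sub>v v) + (Q * B) *\<^sub>v y"
    using orth_compl_proj_decomp[OF Q' QB, of "Q *\<^sub>v v"] Qc v by auto
  have "Q *\<^sub>v v = Q' *\<^sub>v (Q *\<^sub>v v) + Q *\<^sub>v (B *\<^sub>v y)"
    using vy assoc_mult_mat_vec[OF Qc B y(1)] by simp
  then have "Q' *\<^sub>v (Q *\<^sub>v v) = Q *\<^sub>v v - Q *\<^sub>v (B *\<^sub>v y)"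
    by (rule vec_eq_add_imp_eq_minus[where n = n]) (use Qc Q'c B v y in simp_all)
  with y show ?thesis by blast
qed

lemma orth_compl_proj_mult_orth:
  assumes B: "B \<in> carrier_mat n d" and Q: "orth_compl_proj B X Q"
    and Q': "orth_compl_proj (Q * B) Y Q'" and v: "v \<in> carrier_vec n"
    and j: "j \<in> X \<union> Y" "j < d"
  shows "col B j \<bullet> (Q' *\<^sub>v (Q *\<^sub>v v)) = 0"
proof -
  have Qc: "Q \<in> carrier_mat n n" by (rule orth_compl_proj_carrier[OF Q B])
  have QB: "Q * B \<in> carrier_mat n d" using Qc B by simp
  have Q'c: "Q' \<in> carrier_mat n n" by (rule orth_compl_proj_carrier[OF Q' QB])
  have w: "Q' *\<^sub>v (Q *\<^sub>v v) \<in> carrier_vec n" using Q'c Qc v by simp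
  have orth_X: "col B j' \<bullet> (Q' *\<^sub>v (Q *\<^sub>v v)) = 0" if j': "j' \<in> X" "j' < d" for j'
  proof -
    obtain y where y: "y \<in> carrier_vec d" and Q'v: "Q' *\<^sub>v (Q *\<^sub>v v) = Q *\<^sub>v v - Q *\<^sub>v (B *\<^sub>v y)"
      using orth_compl_proj_mult_decomp[OF B Q Q' v] by blast
    have "col B j' \<bullet> (Q' *\<^sub>v (Q *\<^sub>v v)) = col B j' \<bullet> (Q *\<^sub>v v) - col B j' \<bullet> (Q *\<^sub>v (B *\<^sub>v y))"
      unfolding Q'v using Qc B v y by (subst scalar_prod_minus_distrib[of _ n]) (auto simp: col_in_carrier)
    then show ?thesis using orth_compl_proj_orth[OF Q B _ j'] Qc B v y by simp
  qed
  show ?thesis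
  proof (cases "j \<in> X")
    case True
    then show ?thesis using orth_X j(2) by blast
  next
    case False
    then have jY: "j \<in> Y" using j by simp
    obtain y where y: "y \<in> carrier_vec d" "supported_on y X"
      and cy: "col B j = Q *\<^sub>v col B j + B *\<^sub>v y"
      using orth_compl_proj_decomp[OF Q B col_in_carrier[OF B]] by blast
    have "col (Q * B) j \<bullet> (Q' *\<^sub>v (Q *\<^sub>v v)) = 0"
      using orth_compl_proj_orth[OF Q' QB _ jY j(2), of "Q *\<^sub>v v"] Qc v by simp
    then have "(Q *\<^sub>v col B j) \<bullet> (Q' *\<^sub>v (Q *\<^sub>v v)) = 0"
      unfolding col_mult2[OF Qc B j(2)] .
    moreover have "(B *\<^sub>v y) \<bullet> (Q' *\<^sub>v (Q *\<^sub>v v)) = 0"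
      using supported_mult_vec_orth[OF B y w] orth_X by blast
    moreover have "col B j \<bullet> (Q' *\<^sub>v (Q *\<^sub>v v))
        = (Q *\<^sub>v col B j) \<bullet> (Q' *\<^sub>v (Q *\<^sub>v v)) + (B *\<^sub>v y) \<bullet> (Q' *\<^sub>v (Q *\<^sub>v v))"
      by (subst cy, rule add_scalar_prod_distrib[of _ n]) (use Qc B y w in \<open>auto simp: col_in_carrier\<close>)
    ultimately show ?thesis by simp
  qed
qed

lemma orth_compl_proj_mult:
  assumes B: "B \<in> carrier_mat n d" and Q: "orth_compl_proj B X Q"
    and Q': "orth_compl_proj (Q * B) Y Q'"
  shows "orth_compl_proj B (X \<union> Y) (Q' * Q)"
proof -
  have Qc: "Q \<in> carrier_mat n n" by (rule orth_compl_proj_carrier[OF Q B])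
  have Q'c: "Q' \<in> carrier_mat n n" using orth_compl_proj_carrier[OF Q' mult_carrier_mat[OF Qc B]] .
  show ?thesis
  proof (rule orth_compl_projI[OF B])
    fix v :: "real vec" and j assume v: "v \<in> carrier_vec n" and "j \<in> X \<union> Y" "j < d"
    then show "col B j \<bullet> ((Q' * Q) *\<^sub>v v) = 0"
      using orth_compl_proj_mult_orth[OF B Q Q' v] assoc_mult_mat_vec[OF Q'c Qc v] by simp
  next
    fix v :: "real vec" assume v: "v \<in> carrier_vec n"
    obtain y1 where y1: "y1 \<in> carrier_vec d" "supported_on y1 X" and vy1: "v = Q *\<^sub>v v + B *\<^sub>v y1"
      using orth_compl_proj_decomp[OF Q B v] by blast
    obtain y2 where y2: "y2 \<in> carrier_vec d" "supported_on y2 Y"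
      and Q'v: "Q' *\<^sub>v (Q *\<^sub>v v) = Q *\<^sub>v v - Q *\<^sub>v (B *\<^sub>v y2)"
      using orth_compl_proj_mult_decomp[OF B Q Q' v] by blast
    obtain y3 where y3: "y3 \<in> carrier_vec d" "supported_on y3 X"
      and sy3: "B *\<^sub>v y2 = Q *\<^sub>v (B *\<^sub>v y2) + B *\<^sub>v y3"
      using orth_compl_proj_decomp[OF Q B, of "B *\<^sub>v y2"] B y2 by auto
    have By: "B *\<^sub>v (y1 + y2 - y3) = B *\<^sub>v y1 + B *\<^sub>v y2 - B *\<^sub>v y3"
      using y1 y2 y3 B by (simp add: mult_add_distrib_mat_vec mult_minus_distrib_mat_vec)
    have "v - (Q' * Q) *\<^sub>v v = B *\<^sub>v (y1 + y2 - y3)"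
    proof (rule eq_vecI)
      fix i assume "i < dim_vec (B *\<^sub>v (y1 + y2 - y3))"
      then have i: "i < n" using B by simp
      have "v $ i = (Q *\<^sub>v v) $ i + (B *\<^sub>v y1) $ i"
        using arg_cong[OF vy1, of "\<lambda>x. x $ i"] i Qc B y1 by simp
      moreover have "(Q' *\<^sub>v (Q *\<^sub>v v)) $ i = (Q *\<^sub>v v) $ i - (Q *\<^sub>v (B *\<^sub>v y2)) $ i"
        using arg_cong[OF Q'v, of "\<lambda>x. x $ i"] i Qc B y2 by simp
      moreover have "(B *\<^sub>v y2) $ i = (Q *\<^sub>v (B *\<^sub>v y2)) $ i + (B *\<^sub>v y3) $ i"
        using arg_cong[OF sy3, of "\<lambda>x. x $ i"] i Qc B y3 by simp
      ultimately show "(v - (Q' * Q) *\<^sub>v v) $ i = (B *\<^sub>v (y1 + y2 - y3)) $ i"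
        unfolding By assoc_mult_mat_vec[OF Q'c Qc v] using i Qc Q'c B v y1 y2 y3 by simp
    qed (use Q'c Qc v B in simp)
    moreover have "supported_on (y1 + y2 - y3) (X \<union> Y)"
      using y1 y2 y3 unfolding supported_on_def by auto
    ultimately show "\<exists>y \<in> carrier_vec d. supported_on y (X \<union> Y) \<and> v - (Q' * Q) *\<^sub>v v = B *\<^sub>v y"
      using y1 y2 y3 by (intro bexI[of _ "y1 + y2 - y3"]) auto
  qed (use Q'c Qc in simp)
qed

lemma orth_compl_proj_exists:
  assumes B: "B \<in> carrier_mat n d" and X: "X \<subseteq> {0..<d}"
  shows "\<exists>P. orth_compl_proj B X P"
proof -
  have "finite X" using X finite_subset by blast
  from this X show ?thesis
  proof (induction X rule: finite_induct)
    case empty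
    show ?case using orth_compl_proj_one[OF B, of "{}"] by blast
  next
    case (insert i X)
    then obtain Q where Q: "orth_compl_proj B X Q" and i: "i < d" by auto
    have QB: "Q * B \<in> carrier_mat n d" using orth_compl_proj_carrier[OF Q B] B by simp
    have "\<exists>Q'. orth_compl_proj (Q * B) {i} Q'"
      using orth_compl_proj_single_col[OF QB i] orth_compl_proj_one[OF QB, of "{i}"] by blast
    then show ?case using orth_compl_proj_mult[OF B Q] by (metis insert_is_Un sup_commute)
  qed
qed

section \<open>The Moore--Penrose inverse\<close>

lemma col_space_proj_exists:
  assumes M: "(M :: real mat) \<in> carrier_mat n m"
  shows "\<exists>P \<in> carrier_mat n n. transpose_mat P = P \<and> P * M = M \<and>
           (\<forall>x \<in> carrier_vec n. \<exists>y \<in> carrier_vec m. P *\<^sub>v x = M *\<^sub>v y)"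
proof -
  obtain Q where Q: "orth_compl_proj M {0..<m} Q" using orth_compl_proj_exists[OF M] by blast
  have Qc: "Q \<in> carrier_mat n n" by (rule orth_compl_proj_carrier[OF Q M])
  have mult: "(1\<^sub>m n - Q) *\<^sub>v x = x - Q *\<^sub>v x" if "x \<in> carrier_vec n" for x
    using minus_mult_distrib_mat_vec[OF one_carrier_mat Qc that] that by simp
  show ?thesis
  proof (rule bexI[of _ "1\<^sub>m n - Q"], intro conjI ballI)
    show "transpose_mat (1\<^sub>m n - Q) = 1\<^sub>m n - Q"
      using transpose_minus[OF one_carrier_mat Qc] orth_compl_proj_symmetric[OF Q M] by simp
    show "(1\<^sub>m n - Q) * M = M"
    proof (rule mat_col_eqI)
      fix j assume "j < dim_col M"
      then have j: "j < m" using M by simp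
      have "col ((1\<^sub>m n - Q) * M) j = col M j - Q *\<^sub>v col M j"
        using mult[OF col_in_carrier[OF M]] col_mult2[OF minus_carrier_mat[OF Qc] M j] by simp
      also have "\<dots> = col M j" using orth_compl_proj_kills_cols[OF Q M _ j] j M by simp
      finally show "col ((1\<^sub>m n - Q) * M) j = col M j" .
    qed (use Qc M in auto)
    fix x :: "real vec" assume x: "x \<in> carrier_vec n"
    obtain y where "y \<in> carrier_vec m" "x - Q *\<^sub>v x = M *\<^sub>v y"
      using orth_compl_proj_range[OF Q M x] by blast
    then show "\<exists>y \<in> carrier_vec m. (1\<^sub>m n - Q) *\<^sub>v x = M *\<^sub>v y" using mult[OF x] by auto
  qed (rule minus_carrier_mat[OF Qc])
qed

lemma mat_factor_of_range:
  assumes P: "(P :: real mat) \<in> carrier_mat n n" and M: "M \<in> carrier_mat n m"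
    and range: "\<And>x. x \<in> carrier_vec n \<Longrightarrow> \<exists>y \<in> carrier_vec m. P *\<^sub>v x = M *\<^sub>v y"
  shows "\<exists>K \<in> carrier_mat m n. P = M * K"
proof -
  obtain ky where ky: "\<And>j. j < n \<Longrightarrow> ky j \<in> carrier_vec m \<and> P *\<^sub>v unit_vec n j = M *\<^sub>v ky j"
    using range[OF unit_vec_carrier] by metis
  define K where "K = mat m n (\<lambda>(i, j). ky j $ i)"
  have Kc: "K \<in> carrier_mat m n" unfolding K_def by simp
  have colK: "col K j = ky j" if "j < n" for j
    using ky[OF that] that unfolding K_def by (intro eq_vecI) auto
  have "P = M * K"
  proof (rule mat_col_eqI)
    fix j assume "j < dim_col (M * K)"
    then have j: "j < n" using Kc by simp
    then show "col P j = col (M * K) j"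
      using colK[OF j] ky[OF j] mult_unit_vec_eq_col[OF P j] col_mult2[OF M Kc j] by simp
  qed (use P M Kc in auto)
  with Kc show ?thesis by blast
qed

definition penrose_inverse :: "real mat \<Rightarrow> real mat \<Rightarrow> bool" where
  "penrose_inverse M X \<longleftrightarrow> X \<in> carrier_mat (dim_col M) (dim_row M) \<and>
     M * X * M = M \<and> X * M * X = X \<and>
     transpose_mat (M * X) = M * X \<and> transpose_mat (X * M) = X * M"

lemma penrose_inverse_unique:
  assumes M: "M \<in> carrier_mat n m" and X: "penrose_inverse M X" and Y: "penrose_inverse M Y"
  shows "X = Y"
proof -
  have Xc: "X \<in> carrier_mat m n" and Yc: "Y \<in> carrier_mat m n"
    using X Y M unfolding penrose_inverse_def by auto
  have MXM: "M * X * M = M" and XMX: "X * M * X = X" and sX1: "transpose_mat (M * X) = M * X"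
    and sX2: "transpose_mat (X * M) = X * M" using X unfolding penrose_inverse_def by auto
  have MYM: "M * Y * M = M" and YMY: "Y * M * Y = Y" and sY1: "transpose_mat (M * Y) = M * Y"
    and sY2: "transpose_mat (Y * M) = Y * M" using Y unfolding penrose_inverse_def by auto
  have MXc: "M * X \<in> carrier_mat n n" and MYc: "M * Y \<in> carrier_mat n n" using M Xc Yc by auto
  have XMc: "X * M \<in> carrier_mat m m" and YMc: "Y * M \<in> carrier_mat m m" using M Xc Yc by auto
  have MX_eq: "M * X = M * Y"
  proof -
    have tM: "transpose_mat M = transpose_mat M * (M * Y)"
      using arg_cong[OF MYM, of transpose_mat] transpose_mult[OF MYc M] sY1 by simp
    have "M * X = transpose_mat X * transpose_mat M" using sX1 transpose_mult[OF M Xc] by simp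
    also have "\<dots> = (transpose_mat X * transpose_mat M) * (M * Y)"
      by (subst tM, rule assoc_mult_mat[symmetric]) (use M Xc MYc in auto)
    also have "transpose_mat X * transpose_mat M = M * X" using sX1 transpose_mult[OF M Xc] by simp
    also have "(M * X) * (M * Y) = (M * X * M) * Y" by (rule assoc_mult_mat[symmetric, OF MXc M Yc])
    finally show ?thesis using MXM by simp
  qed
  have XM_eq: "X * M = Y * M"
  proof -
    have tM: "transpose_mat M = (Y * M) * transpose_mat M"
      using arg_cong[OF MYM, of transpose_mat] assoc_mult_mat[OF M Yc M] transpose_mult[OF M YMc] sY2
      by simp
    have "X * M = transpose_mat M * transpose_mat X" using sX2 transpose_mult[OF Xc M] by simp
    also have "\<dots> = (Y * M) * (transpose_mat M * transpose_mat X)"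
      by (subst tM, rule assoc_mult_mat) (use M Xc YMc in auto)
    also have "transpose_mat M * transpose_mat X = X * M" using sX2 transpose_mult[OF Xc M] by simp
    also have "(Y * M) * (X * M) = Y * (M * X * M)"
      using assoc_mult_mat[OF Yc M XMc] assoc_mult_mat[OF M Xc M] by simp
    finally show ?thesis using MXM by simp
  qed
  have "X = X * (M * Y)" using XMX assoc_mult_mat[OF Xc M Xc] MX_eq by simp
  also have "\<dots> = Y * M * Y" using assoc_mult_mat[OF Xc M Yc] XM_eq by simp
  finally show ?thesis using YMY by simp
qed

lemma penrose_inverse_exists:
  assumes M: "M \<in> carrier_mat n m"
  shows "\<exists>X. penrose_inverse M X"
proof -
  have Mt: "transpose_mat M \<in> carrier_mat m n" using M by simp
  obtain Pc where Pc: "Pc \<in> carrier_mat n n" "transpose_mat Pc = Pc" "Pc * M = M"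
    and range_c: "\<forall>x \<in> carrier_vec n. \<exists>y \<in> carrier_vec m. Pc *\<^sub>v x = M *\<^sub>v y"
    using col_space_proj_exists[OF M] by blast
  obtain Pr where Pr: "Pr \<in> carrier_mat m m" "transpose_mat Pr = Pr" "Pr * transpose_mat M = transpose_mat M"
    and range_r: "\<forall>x \<in> carrier_vec m. \<exists>y \<in> carrier_vec n. Pr *\<^sub>v x = transpose_mat M *\<^sub>v y"
    using col_space_proj_exists[OF Mt] by blast
  obtain K where K: "K \<in> carrier_mat m n" and PcK: "Pc = M * K"
    using mat_factor_of_range[OF Pc(1) M] range_c by blast
  obtain L where L: "L \<in> carrier_mat n m" and PrL: "Pr = transpose_mat M * L"
    using mat_factor_of_range[OF Pr(1) Mt] range_r by blast
  have Lt: "transpose_mat L \<in> carrier_mat m n" using L by simp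
  have MPr: "M * Pr = M"
    using arg_cong[OF Pr(3), of transpose_mat] transpose_mult[OF Pr(1) Mt] Pr(2) by simp
  have PrL': "Pr = transpose_mat L * M"
    using arg_cong[OF PrL, of transpose_mat] transpose_mult[OF Mt L] Pr(2) by simp
  have PrPr: "Pr * Pr = Pr"
    using PrL assoc_mult_mat[OF Pr(1) Mt L, symmetric] Pr(3) by simp
  (* Pc = M K and Pr = M\<^sup>T L project onto the column spaces of M and M\<^sup>T;
     X = Pr K then satisfies M X = Pc and X M = Pr. *)
  define X where "X = Pr * K"
  have Xc: "X \<in> carrier_mat m n" unfolding X_def using Pr(1) K by simp
  have MX: "M * X = Pc" unfolding X_def PcK
    using assoc_mult_mat[OF M Pr(1) K, symmetric] MPr by simp
  have XM: "X * M = Pr"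
  proof -
    have "X * M = Pr * (K * M)" unfolding X_def by (rule assoc_mult_mat[OF Pr(1) K M])
    also have "\<dots> = transpose_mat L * (M * (K * M))"
      unfolding PrL' using assoc_mult_mat[OF Lt M mult_carrier_mat[OF K M]] .
    also have "M * (K * M) = M" using assoc_mult_mat[OF M K M] PcK Pc(3) by simp
    finally show ?thesis using PrL' by simp
  qed
  have "penrose_inverse M X" unfolding penrose_inverse_def
  proof (intro conjI)
    show "X \<in> carrier_mat (dim_col M) (dim_row M)" using Xc M by simp
    show "M * X * M = M" using MX Pc(3) by simp
    show "X * M * X = X" unfolding XM unfolding X_def
      using assoc_mult_mat[OF Pr(1) Pr(1) K] PrPr by simp
    show "transpose_mat (M * X) = M * X" using MX Pc(2) by simp
    show "transpose_mat (X * M) = X * M" using XM Pr(2) by simp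
  qed
  then show ?thesis by blast
qed

lemma pinv_eq_The: "pinv M = (THE X. penrose_inverse M X)"
  unfolding pinv_def penrose_inverse_def ..

lemma penrose_inverse_pinv: "penrose_inverse M (pinv M)"
proof -
  have M: "M \<in> carrier_mat (dim_row M) (dim_col M)" by auto
  show ?thesis unfolding pinv_eq_The
    using penrose_inverse_exists[OF M] penrose_inverse_unique[OF M] by (metis theI)
qed

lemma penrose_inverse_transpose:
  assumes "penrose_inverse M X"
  shows "penrose_inverse (transpose_mat M) (transpose_mat X)"
proof -
  have Mc: "M \<in> carrier_mat (dim_row M) (dim_col M)" by auto
  have Xc: "X \<in> carrier_mat (dim_col M) (dim_row M)" and MXM: "M * X * M = M"
    and XMX: "X * M * X = X" and s1: "transpose_mat (M * X) = M * X"
    and s2: "transpose_mat (X * M) = X * M"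
    using assms unfolding penrose_inverse_def by auto
  have MX: "M * X \<in> carrier_mat (dim_row M) (dim_row M)" and XM: "X * M \<in> carrier_mat (dim_col M) (dim_col M)"
    using Mc Xc by auto
  have Mt: "transpose_mat M \<in> carrier_mat (dim_col M) (dim_row M)"
    and Xt: "transpose_mat X \<in> carrier_mat (dim_row M) (dim_col M)" using Mc Xc by auto
  have t1: "transpose_mat M * transpose_mat X = transpose_mat (X * M)"
    by (rule transpose_mult[OF Xc Mc, symmetric])
  have t2: "transpose_mat X * transpose_mat M = transpose_mat (M * X)"
    by (rule transpose_mult[OF Mc Xc, symmetric])
  have "transpose_mat (M * X * M) = transpose_mat M * (transpose_mat X * transpose_mat M)"
    unfolding transpose_mult[OF MX Mc] transpose_mult[OF Mc Xc] ..
  then have "transpose_mat M * transpose_mat X * transpose_mat M = transpose_mat (M * X * M)"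
    using assoc_mult_mat[OF Mt Xt Mt] by simp
  moreover have "transpose_mat (X * M * X) = transpose_mat X * (transpose_mat M * transpose_mat X)"
    unfolding transpose_mult[OF XM Xc] transpose_mult[OF Xc Mc] ..
  then have "transpose_mat X * transpose_mat M * transpose_mat X = transpose_mat (X * M * X)"
    using assoc_mult_mat[OF Xt Mt Xt] by simp
  ultimately show ?thesis
    unfolding penrose_inverse_def t1 t2 s1 s2 using Xc MXM XMX by auto
qed

lemma pinv_transpose: "pinv (transpose_mat M) = transpose_mat (pinv M)"
proof -
  have Mt: "transpose_mat M \<in> carrier_mat (dim_col M) (dim_row M)" by auto
  show ?thesis
    using penrose_inverse_unique[OF Mt penrose_inverse_pinv
        penrose_inverse_transpose[OF penrose_inverse_pinv]] .
qed

section \<open>Column submatrices\<close>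

lemma card_bounded_subset: "T \<subseteq> {0..<d} \<Longrightarrow> card {j. j < d \<and> j \<in> T} = card T"
  by (rule arg_cong[where f = card]) auto

lemma pick_bounded_subset:
  assumes "T \<subseteq> {0..<d}" and "p < card T"
  shows "pick T p \<in> T" and "pick T p < d"
  using pick_in_set[of p T] assms by auto

lemma pick_atLeast0LessThan: "i < n \<Longrightarrow> pick {0..<n} i = i"
  using pick_reduce_set[of i n UNIV] pick_UNIV by (simp add: atLeast0LessThan lessThan_def)

lemma pick_index_exists:
  assumes "finite T" and "i \<in> T"
  shows "\<exists>p < card T. pick T p = i"
proof -
  have "{a \<in> T. a < i} \<subset> T" using assms(2) by auto
  then have "card {a \<in> T. a < i} < card T" using assms(1) by (simp add: psubset_card_mono)
  with pick_card_in_set[OF assms(2)] show ?thesis by blast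
qed

lemma pick_remove:
  assumes T: "finite T" and p: "p < card T" and q: "q < card T - 1"
  shows "pick (T - {pick T p}) q = pick T (if q < p then q else Suc q)"
proof -
  define i where "i = pick T p"
  define q' where "q' = (if q < p then q else Suc q)"
  define x where "x = pick T q'"
  have q'c: "q' < card T" unfolding q'_def using p q by auto
  have xT: "x \<in> T" unfolding x_def using pick_in_set q'c by blast
  have iT: "i \<in> T" unfolding i_def using pick_in_set p by blast
  have "q' \<noteq> p" unfolding q'_def by auto
  then have xi: "x \<noteq> i"
    using pick_mono[of q' T] pick_mono[of p T] p q'c unfolding x_def i_def
    by (metis nat_neq_iff order.irrefl)
  have cx: "card {a \<in> T. a < x} = q'" unfolding x_def using card_pick q'c by blast
  have "card {a \<in> T - {i}. a < x} = q"
  proof (cases "q < p")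
    case True
    then have "x < i" unfolding x_def i_def q'_def using pick_mono p by auto
    then have "{a \<in> T - {i}. a < x} = {a \<in> T. a < x}" by auto
    then show ?thesis using cx True unfolding q'_def by simp
  next
    case False
    then have "p < q'" unfolding q'_def by simp
    then have "i < x" unfolding x_def i_def using pick_mono[of q' T p] q'c by blast
    then have "{a \<in> T - {i}. a < x} = {a \<in> T. a < x} - {i}" and "i \<in> {a \<in> T. a < x}"
      using iT by auto
    then show ?thesis using cx False T unfolding q'_def by (simp add: card_Diff_singleton)
  qed
  then have "pick (T - {i}) q = x" using pick_card_in_set[of x "T - {i}"] xT xi by simp
  then show ?thesis unfolding x_def q'_def i_def .
qed

lemma cols_sub_carrier:
  assumes "B \<in> carrier_mat n d" and "T \<subseteq> {0..<d}"
  shows "cols_sub B T \<in> carrier_mat n (card T)"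
  using assms card_bounded_subset[OF assms(2)] card_bounded_subset[of "{0..<n}" n]
  unfolding cols_sub_def by (intro carrier_matI) (auto simp: dim_submatrix)

lemma dim_row_cols_sub[simp]: "dim_row (cols_sub B T) = dim_row B"
  using card_bounded_subset[of "{0..<dim_row B}" "dim_row B"]
  unfolding cols_sub_def by (simp add: dim_submatrix)

lemma col_cols_sub:
  assumes B: "B \<in> carrier_mat n d" and T: "T \<subseteq> {0..<d}" and p: "p < card T"
  shows "col (cols_sub B T) p = col B (pick T p)"
proof (rule eq_vecI)
  fix i assume "i < dim_vec (col B (pick T p))"
  then have i: "i < n" using B by simp
  have "cols_sub B T $$ (i, p) = B $$ (pick {0..<n} i, pick T p)" unfolding cols_sub_def
    using B i p card_bounded_subset[OF T] card_bounded_subset[of "{0..<n}" n]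
    by (subst submatrix_index) auto
  then show "col (cols_sub B T) p $ i = col B (pick T p) $ i"
    using i p B pick_bounded_subset[OF T p] pick_atLeast0LessThan[OF i]
      carrier_matD[OF cols_sub_carrier[OF B T]] by simp
qed (use B cols_sub_carrier[OF B T] in auto)

definition col_selector :: "nat \<Rightarrow> nat set \<Rightarrow> real mat" where
  "col_selector d T = mat d (card T) (\<lambda>(j, p). if j = pick T p then 1 else 0)"

lemma col_selector_carrier: "col_selector d T \<in> carrier_mat d (card T)"
  unfolding col_selector_def by simp

lemma cols_sub_eq_mult_col_selector:
  assumes B: "B \<in> carrier_mat n d" and T: "T \<subseteq> {0..<d}"
  shows "cols_sub B T = B * col_selector d T"
proof (rule mat_col_eqI)
  fix p assume "p < dim_col (B * col_selector d T)"
  then have p: "p < card T" using col_selector_carrier[of d T] by simp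
  have "col (col_selector d T) p = unit_vec d (pick T p)"
    unfolding col_selector_def using p by (intro eq_vecI) (auto simp: unit_vec_def)
  then show "col (cols_sub B T) p = col (B * col_selector d T) p"
    using col_cols_sub[OF B T p] mult_unit_vec_eq_col[OF B pick_bounded_subset(2)[OF T p]]
      col_mult2[OF B col_selector_carrier p] by simp
qed (use cols_sub_carrier[OF B T] B col_selector_carrier[of d T] in auto)

lemma col_selector_supported:
  assumes T: "T \<subseteq> {0..<d}" and z: "z \<in> carrier_vec (card T)"
  shows "supported_on (col_selector d T *\<^sub>v z) T"
  unfolding supported_on_def
proof (intro allI impI)
  fix j assume j: "j < dim_vec (col_selector d T *\<^sub>v z)" "j \<notin> T"
  then have jd: "j < d" using col_selector_carrier[of d T] by simp
  have "(col_selector d T *\<^sub>v z) $ j = (\<Sum>p\<in>{0..<card T}. (if j = pick T p then 1 else 0) * z $ p)"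
    using jd z unfolding col_selector_def by (simp add: scalar_prod_def)
  also have "\<dots> = 0" using j(2) pick_bounded_subset[OF T] by (intro sum.neutral) auto
  finally show "(col_selector d T *\<^sub>v z) $ j = 0" .
qed

section \<open>The projectors \<open>Qproj\<close> and \<open>Pproj\<close>\<close>

lemma Qproj_carrier: "Qproj B T \<in> carrier_mat (dim_row B) (dim_row B)"
  using penrose_inverse_pinv[of "cols_sub B T"]
  unfolding Qproj_def penrose_inverse_def by (intro minus_carrier_mat carrier_matI) auto

lemma Qproj_symmetric: "transpose_mat (Qproj B T) = Qproj B T"
proof -
  define M where "M = cols_sub B T"
  have "pinv M \<in> carrier_mat (dim_col M) (dim_row M)" and sym: "transpose_mat (M * pinv M) = M * pinv M"
    using penrose_inverse_pinv[of M] unfolding penrose_inverse_def by auto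
  then have "M * pinv M \<in> carrier_mat (dim_row B) (dim_row B)" unfolding M_def by auto
  with sym show ?thesis
    unfolding Qproj_def M_def[symmetric] using transpose_minus[OF one_carrier_mat, of "M * pinv M"] by simp
qed

lemma Qproj_orth_compl_proj:
  assumes B: "B \<in> carrier_mat n d" and T: "T \<subseteq> {0..<d}"
  shows "orth_compl_proj B T (Qproj B T)"
proof -
  define M where "M = cols_sub B T"
  define X where "X = pinv M"
  have Mc: "M \<in> carrier_mat n (card T)" unfolding M_def by (rule cols_sub_carrier[OF B T])
  have Xc: "X \<in> carrier_mat (card T) n" and MXM: "M * X * M = M"
    and sym: "transpose_mat (M * X) = M * X"
    using penrose_inverse_pinv[of M] Mc unfolding X_def penrose_inverse_def by auto
  have Q: "Qproj B T = 1\<^sub>m n - M * X" unfolding Qproj_def M_def X_def using B by simp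
  have MX: "M * X \<in> carrier_mat n n" using Mc Xc by simp
  have Qc: "Qproj B T \<in> carrier_mat n n" unfolding Q using MX by (rule minus_carrier_mat)
  have Mt: "transpose_mat M \<in> carrier_mat (card T) n" using Mc by simp
  have "transpose_mat M * (M * X) = transpose_mat ((M * X) * M)"
    using sym transpose_mult[OF MX Mc] by simp
  then have "transpose_mat M * Qproj B T = 0\<^sub>m (card T) n"
    unfolding Q mult_minus_distrib_mat[OF Mt one_carrier_mat MX] using MXM Mt by simp
  note MtQ = this
  show ?thesis
  proof (rule orth_compl_projI[OF B Qc])
    fix v :: "real vec" and j assume v: "v \<in> carrier_vec n" and j: "j \<in> T"
    obtain p where p: "p < card T" "pick T p = j"
      using pick_index_exists[OF finite_subset[OF T] j] by auto
    have "col M p \<bullet> (Qproj B T *\<^sub>v v) = ((transpose_mat M * Qproj B T) *\<^sub>v v) $ p"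
      using assoc_mult_mat_vec[OF Mt Qc v] Mc p by simp
    also have "\<dots> = 0" unfolding MtQ using p v by simp
    finally show "col B j \<bullet> (Qproj B T *\<^sub>v v) = 0"
      using col_cols_sub[OF B T p(1)] p unfolding M_def by simp
  next
    fix v :: "real vec" assume v: "v \<in> carrier_vec n"
    define y where "y = col_selector d T *\<^sub>v (X *\<^sub>v v)"
    have "v - Qproj B T *\<^sub>v v = M *\<^sub>v (X *\<^sub>v v)" unfolding Q
      using minus_mult_distrib_mat_vec[OF one_carrier_mat MX v] assoc_mult_mat_vec[OF Mc Xc v] v MX
      by (intro eq_vecI) auto
    also have "\<dots> = B *\<^sub>v y" unfolding y_def M_def cols_sub_eq_mult_col_selector[OF B T]
      using assoc_mult_mat_vec[OF B col_selector_carrier, of "X *\<^sub>v v"] Xc v by simp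
    finally show "\<exists>y \<in> carrier_vec d. supported_on y T \<and> v - Qproj B T *\<^sub>v v = B *\<^sub>v y"
      using col_selector_supported[OF T, of "X *\<^sub>v v"] col_selector_carrier[of d T] Xc v
      unfolding y_def by (intro bexI[of _ y]) (auto simp: y_def)
  qed
qed

lemma Qproj_mult_Qproj:
  assumes B: "B \<in> carrier_mat n d" and S: "S \<subseteq> {0..<d}" and T: "T \<subseteq> {0..<d}"
  shows "Qproj (Qproj B S * B) T * Qproj B S = Qproj B (S \<union> T)"
proof -
  have QB: "Qproj B S * B \<in> carrier_mat n d" using Qproj_carrier[of B S] B by simp
  show ?thesis
    using orth_compl_proj_unique[OF B orth_compl_proj_mult[OF B Qproj_orth_compl_proj[OF B S]
          Qproj_orth_compl_proj[OF QB T]] Qproj_orth_compl_proj[OF B]] S T by simp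
qed

lemma col_Qproj_insert:
  assumes B: "B \<in> carrier_mat n d" and S: "S \<subseteq> {0..<d}" and i: "i < d" and j: "j < d"
    and nz: "Qproj B S *\<^sub>v col B i \<noteq> 0\<^sub>v n"
  defines "u k \<equiv> Qproj B S *\<^sub>v col B k"
  shows "col (Qproj B (S \<union> {i}) * B) j = u j - ((u i \<bullet> u j) / (u i \<bullet> u i)) \<cdot>\<^sub>v u i"
proof -
  have Qc: "Qproj B S \<in> carrier_mat n n" using Qproj_carrier[of B S] B by simp
  have QB: "Qproj B S * B \<in> carrier_mat n d" using Qc B by simp
  have col_QB: "col (Qproj B S * B) k = u k" if "k < d" for k
    unfolding u_def using col_mult2[OF Qc B that] .
  have "Qproj (Qproj B S * B) {i} = vec_compl_proj (u i)"
    using orth_compl_proj_unique[OF QB Qproj_orth_compl_proj[OF QB]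
        orth_compl_proj_single_col[OF QB i]] i nz col_QB[OF i] unfolding u_def by auto
  then have Qi: "Qproj B (S \<union> {i}) = vec_compl_proj (u i) * Qproj B S"
    using Qproj_mult_Qproj[OF B S, of "{i}"] i by simp
  have ui: "u i \<in> carrier_vec n" and cj: "col B j \<in> carrier_vec n"
    unfolding u_def using Qc B by (auto simp: col_in_carrier)
  show ?thesis
    unfolding Qi col_mult2[OF mult_carrier_mat[OF vec_compl_proj_carrier[OF ui] Qc] B j]
    using assoc_mult_mat_vec[OF vec_compl_proj_carrier[OF ui] Qc cj] vec_compl_proj_mult_vec[OF ui]
      Qc cj unfolding u_def by simp
qed

lemma submatrix_transpose: "transpose_mat (submatrix A I J) = submatrix (transpose_mat A) J I"
proof (rule eq_matI)
  fix i j assume "i < dim_row (submatrix (transpose_mat A) J I)" "j < dim_col (submatrix (transpose_mat A) J I)"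
  then have i: "i < card {a. a < dim_col A \<and> a \<in> J}" and j: "j < card {a. a < dim_row A \<and> a \<in> I}"
    by (auto simp: dim_submatrix)
  show "transpose_mat (submatrix A I J) $$ (i, j) = submatrix (transpose_mat A) J I $$ (i, j)"
    using i j pick_le[OF i] pick_le[OF j] by (simp add: dim_submatrix submatrix_index)
qed (auto simp: dim_submatrix)

lemma rows_sub_eq_transpose_cols_sub: "rows_sub C W = transpose_mat (cols_sub (transpose_mat C) W)"
  unfolding rows_sub_def cols_sub_def submatrix_transpose by simp

lemma Pproj_eq_Qproj_transpose: "Pproj C W = Qproj (transpose_mat C) W"
proof -
  define M where "M = cols_sub (transpose_mat C) W"
  have M: "M \<in> carrier_mat (dim_row M) (dim_col M)" by auto
  have X: "pinv M \<in> carrier_mat (dim_col M) (dim_row M)"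
    and sym: "transpose_mat (M * pinv M) = M * pinv M"
    using penrose_inverse_pinv[of M] unfolding penrose_inverse_def by auto
  have "pinv (rows_sub C W) * rows_sub C W = transpose_mat (pinv M) * transpose_mat M"
    unfolding rows_sub_eq_transpose_cols_sub M_def[symmetric] pinv_transpose ..
  also have "\<dots> = M * pinv M" using transpose_mult[OF M X, symmetric] sym by simp
  finally show ?thesis unfolding Pproj_def Qproj_def M_def by simp
qed

lemma Pproj_carrier: "C \<in> carrier_mat nC d \<Longrightarrow> Pproj C W \<in> carrier_mat d d"
  unfolding Pproj_eq_Qproj_transpose using Qproj_carrier[of "transpose_mat C" W] by simp

lemma Pproj_symmetric: "transpose_mat (Pproj C W) = Pproj C W"
  unfolding Pproj_eq_Qproj_transpose by (rule Qproj_symmetric)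

lemma transpose_mult_Pproj:
  assumes C: "C \<in> carrier_mat nC d"
  shows "transpose_mat (C * Pproj C R) = Qproj (transpose_mat C) R * transpose_mat C"
  using transpose_mult[OF C Pproj_carrier[OF C]] Pproj_symmetric Pproj_eq_Qproj_transpose by simp

lemma Pproj_mult_Pproj:
  assumes C: "C \<in> carrier_mat nC d" and R: "R \<subseteq> {0..<nC}" and W: "W \<subseteq> {0..<nC}"
  shows "Pproj C R * Pproj (C * Pproj C R) W = Pproj C (R \<union> W)"
proof -
  define Ct where "Ct = transpose_mat C"
  have Ctc: "Ct \<in> carrier_mat d nC" unfolding Ct_def using C by simp
  have P: "Pproj C R = Qproj Ct R" unfolding Ct_def by (rule Pproj_eq_Qproj_transpose)
  have P': "Pproj (C * Pproj C R) W = Qproj (Qproj Ct R * Ct) W"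
    unfolding Pproj_eq_Qproj_transpose[of "C * Pproj C R"] transpose_mult_Pproj[OF C] Ct_def ..
  have Pc: "Qproj Ct R \<in> carrier_mat d d" using Qproj_carrier[of Ct R] Ctc by simp
  have P'c: "Qproj (Qproj Ct R * Ct) W \<in> carrier_mat d d"
    using Qproj_carrier[of "Qproj Ct R * Ct" W] Pc Ctc by simp
  have "Qproj (Qproj Ct R * Ct) W * Qproj Ct R = Pproj C (R \<union> W)"
    using Qproj_mult_Qproj[OF Ctc R W] unfolding Ct_def Pproj_eq_Qproj_transpose .
  then have "transpose_mat (Pproj C (R \<union> W)) = Qproj Ct R * Qproj (Qproj Ct R * Ct) W"
    using transpose_mult[OF P'c Pc] Qproj_symmetric by metis
  with P P' show ?thesis by (simp add: Pproj_symmetric)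
qed

lemma pTW_deflate:
  assumes A: "A \<in> carrier_mat n d" and B: "B \<in> carrier_mat n dB" and C: "C \<in> carrier_mat nC d"
    and S: "S \<subseteq> {0..<dB}" and T: "T \<subseteq> {0..<dB}" and R: "R \<subseteq> {0..<nC}" and W: "W \<subseteq> {0..<nC}"
  shows "pTW T W (Qproj B S * A * Pproj C R) (Qproj B S * B) (C * Pproj C R) =
    pTW (S \<union> T) (R \<union> W) A B C"
proof -
  define Q where "Q = Qproj B S"
  define Q' where "Q' = Qproj (Q * B) T"
  define P where "P = Pproj C R"
  define P' where "P' = Pproj (C * P) W"
  have Qc: "Q \<in> carrier_mat n n" unfolding Q_def using Qproj_carrier[of B S] B by simp
  have Q'c: "Q' \<in> carrier_mat n n" unfolding Q'_def using Qproj_carrier[of "Q * B" T] Qc B by simp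
  have Pc: "P \<in> carrier_mat d d" unfolding P_def by (rule Pproj_carrier[OF C])
  have P'c: "P' \<in> carrier_mat d d" unfolding P'_def using Pproj_carrier[OF mult_carrier_mat[OF C Pc]] .
  have QA: "Q * A \<in> carrier_mat n d" and Q'QA: "Q' * Q * A \<in> carrier_mat n d" using Qc Q'c A by auto
  have "Q' * (Q * A * P) * P' = Q' * Q * A * P * P'"
    using assoc_mult_mat[OF Q'c QA Pc] assoc_mult_mat[OF Q'c Qc A] by simp
  also have "\<dots> = (Q' * Q) * A * (P * P')" using assoc_mult_mat[OF Q'QA Pc P'c] by simp
  also have "\<dots> = Qproj B (S \<union> T) * A * Pproj C (R \<union> W)"
    unfolding Q'_def Q_def P'_def P_def Qproj_mult_Qproj[OF B S T] Pproj_mult_Pproj[OF C R W] ..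
  finally show ?thesis unfolding pTW_def Let_def Q'_def Q_def P'_def P_def by simp
qed

section \<open>Gram determinants\<close>

definition gram_det :: "(nat \<Rightarrow> real vec) \<Rightarrow> nat \<Rightarrow> real" where
  "gram_det f m = det (mat m m (\<lambda>(p, q). f p \<bullet> f q))"

lemma gram_det_cong: "(\<And>q. q < m \<Longrightarrow> f q = g q) \<Longrightarrow> gram_det f m = gram_det g m"
  unfolding gram_det_def by (intro arg_cong[where f = det] eq_matI) auto

lemma gram_det_zero:
  assumes "\<And>q. q < m \<Longrightarrow> f q \<in> carrier_vec n" and "p < m" and "f p = 0\<^sub>v n"
  shows "gram_det f m = 0"
proof -
  define G where "G = mat m m (\<lambda>(p, q). f p \<bullet> f q)"
  have G: "G \<in> carrier_mat m m" unfolding G_def by simp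
  have "det G = (\<Sum>j<m. G $$ (p, j) * cofactor G p j)" by (rule laplace_expansion_row[OF G assms(2)])
  also have "\<dots> = 0" using assms unfolding G_def by (intro sum.neutral) auto
  finally show ?thesis unfolding gram_det_def G_def .
qed

lemma det_one_minus_row:
  assumes p: "p < m" and c: "c p = 0"
  shows "det (mat m m (\<lambda>(s, q). (if s = q then 1 else 0) - (if s = p then c q else 0)) :: real mat) = 1"
proof -
  define E :: "real mat" where "E = mat m m (\<lambda>(s, q). (if s = q then 1 else 0) - (if s = p then c q else 0))"
  have Ec: "E \<in> carrier_mat m m" unfolding E_def by simp
  have "det E = (\<Sum>s<m. E $$ (s, p) * cofactor E s p)" by (rule laplace_expansion_column[OF Ec p])
  also have "\<dots> = (\<Sum>s<m. if s = p then cofactor E p p else 0)"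
    using p c unfolding E_def by (intro sum.cong) auto
  also have "\<dots> = det (mat_delete E p p)" using p unfolding cofactor_def by simp
  also have "mat_delete E p p = 1\<^sub>m (m - 1)" unfolding mat_delete_def E_def by (intro eq_matI) auto
  finally show ?thesis unfolding E_def by simp
qed

lemma gram_det_eq_det_transpose_mult:
  assumes "\<And>q. q < m \<Longrightarrow> g q \<in> carrier_vec n"
  defines "V \<equiv> mat n m (\<lambda>(r, q). g q $ r)"
  shows "gram_det g m = det (transpose_mat V * V)"
proof -
  have "col V q = g q" if "q < m" for q
    using that assms(1)[OF that] unfolding V_def by (intro eq_vecI) auto
  then show ?thesis unfolding gram_det_def V_def by (intro arg_cong[where f = det] eq_matI) auto
qed

lemma gram_det_shear:
  assumes f: "\<And>q. q < m \<Longrightarrow> f q \<in> carrier_vec n" and p: "p < m" and c: "c p = 0"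
  shows "gram_det (\<lambda>q. f q - c q \<cdot>\<^sub>v f p) m = gram_det f m"
proof -
  define V :: "real mat" where "V = mat n m (\<lambda>(r, q). f q $ r)"
  define E :: "real mat" where "E = mat m m (\<lambda>(s, q). (if s = q then 1 else 0) - (if s = p then c q else 0))"
  have V: "V \<in> carrier_mat n m" and E: "E \<in> carrier_mat m m" unfolding V_def E_def by auto
  have VE: "V * E = mat n m (\<lambda>(r, q). (f q - c q \<cdot>\<^sub>v f p) $ r)"
  proof (rule eq_matI)
    fix r q assume "r < dim_row (mat n m (\<lambda>(r, q). (f q - c q \<cdot>\<^sub>v f p) $ r))"
      "q < dim_col (mat n m (\<lambda>(r, q). (f q - c q \<cdot>\<^sub>v f p) $ r))"
    then have r: "r < n" and q: "q < m" by auto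
    have "(V * E) $$ (r, q) =
        (\<Sum>s\<in>{0..<m}. f s $ r * ((if s = q then 1 else 0) - (if s = p then c q else 0)))"
      using r q unfolding V_def E_def by (simp add: scalar_prod_def)
    also have "\<dots> = (\<Sum>s\<in>{0..<m}. (if s = q then f s $ r else 0))
        - (\<Sum>s\<in>{0..<m}. (if s = p then c q * f s $ r else 0))"
      by (simp only: right_diff_distrib sum_subtractf) (intro arg_cong2[where f = "(-)"] sum.cong, auto)
    also have "\<dots> = f q $ r - c q * f p $ r" using q p by simp
    finally show "(V * E) $$ (r, q) = mat n m (\<lambda>(r, q). (f q - c q \<cdot>\<^sub>v f p) $ r) $$ (r, q)"
      using r q f[OF q] f[OF p] by simp
  qed (use V E in auto)
  have "gram_det (\<lambda>q. f q - c q \<cdot>\<^sub>v f p) m = det (transpose_mat (V * E) * (V * E))"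
    unfolding VE using f p by (intro gram_det_eq_det_transpose_mult) auto
  also have "transpose_mat (V * E) * (V * E) = transpose_mat E * (transpose_mat V * V) * E"
  proof -
    have Et: "transpose_mat E \<in> carrier_mat m m" and Vt: "transpose_mat V \<in> carrier_mat m n"
      using V E by auto
    have "transpose_mat E * transpose_mat V * (V * E) = transpose_mat E * transpose_mat V * V * E"
      by (rule assoc_mult_mat[symmetric, OF mult_carrier_mat[OF Et Vt] V E])
    then show ?thesis unfolding transpose_mult[OF V E] assoc_mult_mat[OF Et Vt V] .
  qed
  also have "det \<dots> = det (transpose_mat V * V)"
    using V E det_mult[of _ m] det_transpose[OF E] det_one_minus_row[OF p, of c] c
    by (simp add: E_def[symmetric] det_mult[of _ m])
  also have "\<dots> = gram_det f m" unfolding V_def using f by (intro gram_det_eq_det_transpose_mult[symmetric])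
  finally show ?thesis .
qed

lemma gram_det_orth_row:
  assumes p: "p < m" and orth: "\<And>q. q < m \<Longrightarrow> q \<noteq> p \<Longrightarrow> h p \<bullet> h q = 0"
  shows "gram_det h m = (h p \<bullet> h p) * gram_det (\<lambda>q. h (if q < p then q else Suc q)) (m - 1)"
proof -
  define H where "H = mat m m (\<lambda>(a, b). h a \<bullet> h b)"
  have H: "H \<in> carrier_mat m m" unfolding H_def by simp
  have "det H = (\<Sum>j<m. H $$ (p, j) * cofactor H p j)" by (rule laplace_expansion_row[OF H p])
  also have "\<dots> = (\<Sum>j<m. if j = p then (h p \<bullet> h p) * cofactor H p p else 0)"
    using orth p unfolding H_def by (intro sum.cong) auto
  also have "\<dots> = (h p \<bullet> h p) * det (mat_delete H p p)" using p unfolding cofactor_def by simp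
  also have "mat_delete H p p =
      mat (m - 1) (m - 1) (\<lambda>(a, b). h (if a < p then a else Suc a) \<bullet> h (if b < p then b else Suc b))"
    unfolding mat_delete_def H_def by (intro eq_matI) auto
  finally show ?thesis unfolding gram_det_def H_def .
qed

lemma gram_det_deflate:
  assumes f: "\<And>q. q < m \<Longrightarrow> f q \<in> carrier_vec n" and p: "p < m" and nz: "f p \<noteq> 0\<^sub>v n"
  defines "skip q \<equiv> if q < p then q else Suc q"
  shows "gram_det f m = (f p \<bullet> f p) *
    gram_det (\<lambda>q. f (skip q) - ((f p \<bullet> f (skip q)) / (f p \<bullet> f p)) \<cdot>\<^sub>v f p) (m - 1)"
proof -
  define u where "u = f p"
  have u: "u \<in> carrier_vec n" unfolding u_def using f p by simp
  have uu: "u \<bullet> u \<noteq> 0" using scalar_prod_self_eq_0_iff[OF u] nz unfolding u_def by simp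
  define c where "c q = (if q = p then 0 else (u \<bullet> f q) / (u \<bullet> u))" for q
  define h where "h q = f q - c q \<cdot>\<^sub>v u" for q
  have hp: "h p = u" unfolding h_def c_def u_def using f p by (intro eq_vecI) auto
  have orth: "h p \<bullet> h q = 0" if "q < m" "q \<noteq> p" for q
  proof -
    have "u \<bullet> h q = u \<bullet> f q - c q * (u \<bullet> u)"
      unfolding h_def using u f[OF that(1)] by (subst scalar_prod_minus_distrib[of _ n]) auto
    then show ?thesis using that uu hp unfolding c_def by simp
  qed
  have c0: "c p = 0" unfolding c_def by simp
  have "gram_det h m = gram_det f m"
    unfolding h_def u_def by (rule gram_det_shear[where c = c, OF f p c0])
  then have "gram_det f m = gram_det h m" ..
  also have "\<dots> = (u \<bullet> u) * gram_det (\<lambda>q. h (skip q)) (m - 1)"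
    using gram_det_orth_row[where h = h, OF p orth] hp unfolding skip_def by simp
  also have "gram_det (\<lambda>q. h (skip q)) (m - 1) =
      gram_det (\<lambda>q. f (skip q) - ((u \<bullet> f (skip q)) / (u \<bullet> u)) \<cdot>\<^sub>v u) (m - 1)"
    by (rule gram_det_cong) (simp add: h_def c_def skip_def)
  finally show ?thesis unfolding u_def .
qed

definition col_gram :: "real mat \<Rightarrow> nat set \<Rightarrow> real" where
  "col_gram M T = det (transpose_mat (cols_sub M T) * cols_sub M T)"

lemma col_gram_eq_gram_det:
  assumes B: "B \<in> carrier_mat n d" and T: "T \<subseteq> {0..<d}"
  shows "col_gram B T = gram_det (\<lambda>p. col B (pick T p)) (card T)"
  unfolding col_gram_def gram_det_def
  using cols_sub_carrier[OF B T] col_cols_sub[OF B T]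
  by (intro arg_cong[where f = det] eq_matI) auto

lemma det_rows_sub_gram:
  "det (rows_sub C W * transpose_mat (rows_sub C W)) = col_gram (transpose_mat C) W"
  unfolding col_gram_def rows_sub_eq_transpose_cols_sub transpose_transpose ..

lemma col_gram_zero_col:
  assumes B: "B \<in> carrier_mat n d" and T: "T \<subseteq> {0..<d}" and i: "i \<in> T" and zero: "col B i = 0\<^sub>v n"
  shows "col_gram B T = 0"
proof -
  obtain p where p: "p < card T" "pick T p = i"
    using pick_index_exists[OF finite_subset[OF T] i] by auto
  show ?thesis unfolding col_gram_eq_gram_det[OF B T]
    by (rule gram_det_zero[OF _ p(1)]) (use B zero p in \<open>auto simp: col_in_carrier\<close>)
qed

lemma col_gram_deflate:
  assumes B: "B \<in> carrier_mat n d" and B': "B' \<in> carrier_mat n d"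
    and T: "T \<subseteq> {0..<d}" and i: "i \<in> T" and nz: "col B i \<noteq> 0\<^sub>v n"
    and cols: "\<And>j. j < d \<Longrightarrow>
      col B' j = col B j - ((col B i \<bullet> col B j) / (col B i \<bullet> col B i)) \<cdot>\<^sub>v col B i"
  shows "col_gram B T = (col B i \<bullet> col B i) * col_gram B' (T - {i})"
proof -
  have fin: "finite T" using T finite_subset by blast
  obtain p where p: "p < card T" and pi: "pick T p = i"
    using pick_index_exists[OF fin i] by auto
  have T': "T - {i} \<subseteq> {0..<d}" using T by auto
  have card: "card (T - {i}) = card T - 1" using i fin by simp
  have "col_gram B T = (col B i \<bullet> col B i) * gram_det (\<lambda>q. col B (pick T (if q < p then q else Suc q))
      - ((col B i \<bullet> col B (pick T (if q < p then q else Suc q))) / (col B i \<bullet> col B i)) \<cdot>\<^sub>v col B i)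
      (card T - 1)"
    unfolding col_gram_eq_gram_det[OF B T]
    using gram_det_deflate[of "card T" "\<lambda>p. col B (pick T p)" n p] B p pi nz
    by (simp add: col_in_carrier)
  also have "gram_det (\<lambda>q. col B (pick T (if q < p then q else Suc q))
      - ((col B i \<bullet> col B (pick T (if q < p then q else Suc q))) / (col B i \<bullet> col B i)) \<cdot>\<^sub>v col B i)
      (card T - 1) = col_gram B' (T - {i})"
    unfolding col_gram_eq_gram_det[OF B' T'] card
  proof (rule gram_det_cong)
    fix q assume q: "q < card T - 1"
    then have "(if q < p then q else Suc q) < card T" using p by auto
    then have "pick T (if q < p then q else Suc q) < d" using pick_bounded_subset[OF T] by blast
    then show "col B (pick T (if q < p then q else Suc q))
      - ((col B i \<bullet> col B (pick T (if q < p then q else Suc q))) / (col B i \<bullet> col B i)) \<cdot>\<^sub>v col B i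
      = col B' (pick (T - {i}) q)"
      using cols pick_remove[OF fin p q] pi by simp
  qed
  finally show ?thesis .
qed

lemma col_Qproj_mult_self:
  assumes B: "B \<in> carrier_mat n d" and S: "S \<subseteq> {0..<d}" and j: "j \<in> S"
  shows "col (Qproj B S * B) j = 0\<^sub>v n"
proof -
  have Q: "Qproj B S \<in> carrier_mat n n" using Qproj_carrier[of B S] B by simp
  have "j < d" using S j by auto
  then show ?thesis
    using col_mult2[OF Q B] orth_compl_proj_kills_cols[OF Qproj_orth_compl_proj[OF B S] B j] by simp
qed

lemma col_gram_Qproj_insert:
  assumes B: "B \<in> carrier_mat n d" and S: "S \<subseteq> {0..<d}" and T: "T \<subseteq> {0..<d}"
    and i: "i < d" "i \<notin> T" and nz: "Qproj B S *\<^sub>v col B i \<noteq> 0\<^sub>v n"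
  shows "col_gram (Qproj B S * B) (insert i T) =
    ((Qproj B S *\<^sub>v col B i) \<bullet> (Qproj B S *\<^sub>v col B i)) * col_gram (Qproj B (S \<union> {i}) * B) T"
proof -
  have Q: "Qproj B S \<in> carrier_mat n n" using Qproj_carrier[of B S] B by simp
  have Qi: "Qproj B (S \<union> {i}) \<in> carrier_mat n n" using Qproj_carrier[of B "S \<union> {i}"] B by simp
  have col_QB: "col (Qproj B S * B) j = Qproj B S *\<^sub>v col B j" if "j < d" for j
    using col_mult2[OF Q B that] .
  have "col_gram (Qproj B S * B) (insert i T) =
      (col (Qproj B S * B) i \<bullet> col (Qproj B S * B) i) * col_gram (Qproj B (S \<union> {i}) * B) (insert i T - {i})"
  proof (rule col_gram_deflate)
    fix j assume "j < d"
    then show "col (Qproj B (S \<union> {i}) * B) j = col (Qproj B S * B) j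
        - ((col (Qproj B S * B) i \<bullet> col (Qproj B S * B) j) /
           (col (Qproj B S * B) i \<bullet> col (Qproj B S * B) i)) \<cdot>\<^sub>v col (Qproj B S * B) i"
      using col_Qproj_insert[OF B S i(1) _ nz] col_QB i by simp
  qed (use B Q Qi T i nz col_QB in auto)
  then show ?thesis using i col_QB by simp
qed

section \<open>The recursion\<close>

lemma sum_card_subsets_insert:
  fixes g :: "'b \<Rightarrow> 'b set \<Rightarrow> 'a :: comm_monoid_add"
  assumes D: "finite D" and m: "0 < m"
  shows "(\<Sum>T | T \<subseteq> D \<and> card T = m. \<Sum>i\<in>T. g i T) =
    (\<Sum>i\<in>D. \<Sum>T | T \<subseteq> D - {i} \<and> card T = m - 1. g i (insert i T))"
proof -
  have fin: "finite {T. T \<subseteq> D \<and> card T = m}" using D by (auto intro: finite_subset[of _ "Pow D"])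
  have "(\<Sum>T | T \<subseteq> D \<and> card T = m. \<Sum>i\<in>T. g i T) =
      (\<Sum>T | T \<subseteq> D \<and> card T = m. \<Sum>i | i \<in> D \<and> i \<in> T. g i T)"
  proof (rule sum.cong[OF refl])
    fix T assume "T \<in> {T. T \<subseteq> D \<and> card T = m}"
    then have "{i. i \<in> D \<and> i \<in> T} = T" by auto
    then show "(\<Sum>i\<in>T. g i T) = (\<Sum>i | i \<in> D \<and> i \<in> T. g i T)" by simp
  qed
  also have "\<dots> = (\<Sum>i\<in>D. \<Sum>T | T \<in> {T. T \<subseteq> D \<and> card T = m} \<and> i \<in> T. g i T)"
    by (rule sum.swap_restrict[OF fin D])
  also have "\<dots> = (\<Sum>i\<in>D. \<Sum>T | T \<subseteq> D - {i} \<and> card T = m - 1. g i (insert i T))"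
  proof (rule sum.cong[OF refl])
    fix i assume i: "i \<in> D"
    have "bij_betw (insert i) {T. T \<subseteq> D - {i} \<and> card T = m - 1} {T. T \<in> {T. T \<subseteq> D \<and> card T = m} \<and> i \<in> T}"
    proof (rule bij_betw_byWitness[where f' = "\<lambda>T. T - {i}"])
      show "insert i ` {T. T \<subseteq> D - {i} \<and> card T = m - 1} \<subseteq> {T. T \<in> {T. T \<subseteq> D \<and> card T = m} \<and> i \<in> T}"
      proof
        fix X assume "X \<in> insert i ` {T. T \<subseteq> D - {i} \<and> card T = m - 1}"
        then obtain T where T: "T \<subseteq> D - {i}" "card T = m - 1" and X: "X = insert i T" by auto
        then have "finite T" "i \<notin> T" using D finite_subset by auto
        then show "X \<in> {T. T \<in> {T. T \<subseteq> D \<and> card T = m} \<and> i \<in> T}" using T X i m by auto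
      qed
      show "(\<lambda>T. T - {i}) ` {T. T \<in> {T. T \<subseteq> D \<and> card T = m} \<and> i \<in> T} \<subseteq> {T. T \<subseteq> D - {i} \<and> card T = m - 1}"
      proof
        fix X assume "X \<in> (\<lambda>T. T - {i}) ` {T. T \<in> {T. T \<subseteq> D \<and> card T = m} \<and> i \<in> T}"
        then obtain T where T: "T \<subseteq> D" "i \<in> T" "card T = m" and X: "X = T - {i}" by auto
        then have "finite T" using D finite_subset by auto
        then show "X \<in> {T. T \<subseteq> D - {i} \<and> card T = m - 1}" using T X by auto
      qed
    qed auto
    then show "(\<Sum>T | T \<in> {T. T \<subseteq> D \<and> card T = m} \<and> i \<in> T. g i T) =
        (\<Sum>T | T \<subseteq> D - {i} \<and> card T = m - 1. g i (insert i T))"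
      by (rule sum.reindex_bij_betw[symmetric])
  qed
  finally show ?thesis .
qed

lemma smult_sum_distrib: "Polynomial.smult c (sum f A) = (\<Sum>x\<in>A. Polynomial.smult c (f x))"
  by (induct A rule: infinite_finite_induct) (auto simp: smult_add_right)

lemma sum_col_gram_insert:
  fixes F :: "nat set \<Rightarrow> real poly"
  assumes B: "B \<in> carrier_mat n d" and S: "S \<subseteq> {0..<d}" and i: "i < d"
    and nz: "Qproj B S *\<^sub>v col B i \<noteq> 0\<^sub>v n"
  shows "(\<Sum>T | T \<subseteq> {0..<d} - {i} \<and> card T = m.
      Polynomial.smult (col_gram (Qproj B S * B) (insert i T)) (F (S \<union> insert i T))) =
    Polynomial.smult ((vnorm (Qproj B S *\<^sub>v col B i))\<^sup>2)
      (\<Sum>T | T \<subseteq> {0..<d} \<and> card T = m.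
        Polynomial.smult (col_gram (Qproj B (S \<union> {i}) * B) T) (F (S \<union> {i} \<union> T)))"
proof -
  define h where "h T =
    Polynomial.smult (col_gram (Qproj B (S \<union> {i}) * B) T) (F (S \<union> {i} \<union> T))" for T
  have Si: "S \<union> {i} \<subseteq> {0..<d}" using S i by auto
  have QiB: "Qproj B (S \<union> {i}) * B \<in> carrier_mat n d" using Qproj_carrier[of B "S \<union> {i}"] B by simp
  have "(\<Sum>T | T \<subseteq> {0..<d} - {i} \<and> card T = m.
      Polynomial.smult (col_gram (Qproj B S * B) (insert i T)) (F (S \<union> insert i T))) =
      (\<Sum>T | T \<subseteq> {0..<d} - {i} \<and> card T = m.
        Polynomial.smult ((vnorm (Qproj B S *\<^sub>v col B i))\<^sup>2) (h T))"
  proof (rule sum.cong[OF refl])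
    fix T assume "T \<in> {T. T \<subseteq> {0..<d} - {i} \<and> card T = m}"
    then have T: "T \<subseteq> {0..<d}" "i \<notin> T" by auto
    have "S \<union> insert i T = S \<union> {i} \<union> T" by auto
    then show "Polynomial.smult (col_gram (Qproj B S * B) (insert i T)) (F (S \<union> insert i T)) =
        Polynomial.smult ((vnorm (Qproj B S *\<^sub>v col B i))\<^sup>2) (h T)"
      unfolding h_def vnorm_power2 using col_gram_Qproj_insert[OF B S T(1) i T(2) nz] by simp
  qed
  also have "\<dots> = Polynomial.smult ((vnorm (Qproj B S *\<^sub>v col B i))\<^sup>2)
      (\<Sum>T | T \<subseteq> {0..<d} - {i} \<and> card T = m. h T)"
    by (simp add: smult_sum_distrib)
  also have "(\<Sum>T | T \<subseteq> {0..<d} - {i} \<and> card T = m. h T) = (\<Sum>T | T \<subseteq> {0..<d} \<and> card T = m. h T)"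
  proof (rule sum.mono_neutral_left)
    show "\<forall>T \<in> {T. T \<subseteq> {0..<d} \<and> card T = m} - {T. T \<subseteq> {0..<d} - {i} \<and> card T = m}. h T = 0"
    proof
      fix T assume "T \<in> {T. T \<subseteq> {0..<d} \<and> card T = m} - {T. T \<subseteq> {0..<d} - {i} \<and> card T = m}"
      then have "T \<subseteq> {0..<d}" and "i \<in> T" by auto
      then show "h T = 0"
        unfolding h_def using col_gram_zero_col[OF QiB] col_Qproj_mult_self[OF B Si, of i] by simp
    qed
  qed (auto intro: finite_subset[of _ "Pow {0..<d}"])
  finally show ?thesis unfolding h_def .
qed

lemma sum_col_gram_deflate:
  fixes F :: "nat set \<Rightarrow> real poly"
  assumes B: "B \<in> carrier_mat n d" and S: "S \<subseteq> {0..<d}" and m: "0 < m"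
  shows "(\<Sum>T | T \<subseteq> {0..<d} \<and> card T = m.
      Polynomial.smult (col_gram (Qproj B S * B) T) (F (S \<union> T))) =
    Polynomial.smult (1 / real m)
      (\<Sum>i | i \<in> {0..<d} \<and> vnorm (Qproj B S *\<^sub>v col B i) \<noteq> 0.
        Polynomial.smult ((vnorm (Qproj B S *\<^sub>v col B i))\<^sup>2)
          (\<Sum>T | T \<subseteq> {0..<d} \<and> card T = m - 1.
            Polynomial.smult (col_gram (Qproj B (S \<union> {i}) * B) T) (F (S \<union> {i} \<union> T))))"
    (is "?lhs = Polynomial.smult _ (\<Sum>i\<in>?I. ?rhs i)")
proof -
  define g where "g T = Polynomial.smult (col_gram (Qproj B S * B) T) (F (S \<union> T))" for T
  have Q: "Qproj B S \<in> carrier_mat n n" using Qproj_carrier[of B S] B by simp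
  have QB: "Qproj B S * B \<in> carrier_mat n d" using Q B by simp
  have I: "i \<in> ?I \<longleftrightarrow> i < d \<and> col (Qproj B S * B) i \<noteq> 0\<^sub>v n" for i
    using vnorm_eq_0_iff[of "Qproj B S *\<^sub>v col B i" n] col_mult2[OF Q B, of i] Q B
    by (auto simp: col_in_carrier)
  have "Polynomial.smult (real m) ?lhs = (\<Sum>T | T \<subseteq> {0..<d} \<and> card T = m. \<Sum>i\<in>T. g T)"
    unfolding smult_sum_distrib g_def using smult_sum[of "\<lambda>_. 1"] by (intro sum.cong) auto
  also have "\<dots> = (\<Sum>i\<in>{0..<d}. \<Sum>T | T \<subseteq> {0..<d} - {i} \<and> card T = m - 1. g (insert i T))"
    by (rule sum_card_subsets_insert) (use m in auto)
  also have "\<dots> = (\<Sum>i\<in>?I. \<Sum>T | T \<subseteq> {0..<d} - {i} \<and> card T = m - 1. g (insert i T))"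
  proof (rule sum.mono_neutral_right)
    show "\<forall>i \<in> {0..<d} - ?I. (\<Sum>T | T \<subseteq> {0..<d} - {i} \<and> card T = m - 1. g (insert i T)) = 0"
    proof (intro ballI sum.neutral)
      fix i T assume "i \<in> {0..<d} - ?I" and "T \<in> {T. T \<subseteq> {0..<d} - {i} \<and> card T = m - 1}"
      then have ins: "insert i T \<subseteq> {0..<d}" and zero: "col (Qproj B S * B) i = 0\<^sub>v n"
        using I by auto
      show "g (insert i T) = 0" unfolding g_def using col_gram_zero_col[OF QB ins insertI1 zero] by simp
    qed
  qed auto
  also have "\<dots> = (\<Sum>i\<in>?I. ?rhs i)"
    unfolding g_def by (intro sum.cong refl sum_col_gram_insert[OF B S]) (auto simp: I col_mult2[OF Q B] vnorm_def)
  finally have "Polynomial.smult (real m) ?lhs = (\<Sum>i\<in>?I. ?rhs i)" .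
  moreover have "?lhs = Polynomial.smult (1 / real m) (Polynomial.smult (real m) ?lhs)"
    using m by simp
  ultimately show ?thesis by simp
qed

lemma sum_smult_swap:
  "(\<Sum>w\<in>W. Polynomial.smult (a w) (\<Sum>t\<in>T. Polynomial.smult (b t) (f t w))) =
   (\<Sum>t\<in>T. Polynomial.smult (b t) (\<Sum>w\<in>W. Polynomial.smult (a w) (f t w)))"
proof -
  have "(\<Sum>w\<in>W. Polynomial.smult (a w) (\<Sum>t\<in>T. Polynomial.smult (b t) (f t w))) =
      (\<Sum>w\<in>W. \<Sum>t\<in>T. Polynomial.smult (b t * a w) (f t w))"
    by (simp add: smult_sum_distrib mult_ac)
  also have "\<dots> = (\<Sum>t\<in>T. \<Sum>w\<in>W. Polynomial.smult (b t * a w) (f t w))" by (rule sum.swap)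
  also have "\<dots> = (\<Sum>t\<in>T. Polynomial.smult (b t) (\<Sum>w\<in>W. Polynomial.smult (a w) (f t w)))"
    by (simp add: smult_sum_distrib)
  finally show ?thesis .
qed

lemma Pkr_deflated:
  assumes A: "A \<in> carrier_mat n d" and B: "B \<in> carrier_mat n dB" and C: "C \<in> carrier_mat nC d"
    and S: "S \<subseteq> {0..<dB}" and R: "R \<subseteq> {0..<nC}"
  shows "Pkr k r (Qproj B S * A * Pproj C R) (Qproj B S * B) (C * Pproj C R) =
    (\<Sum>W | W \<subseteq> {0..<nC} \<and> card W = r.
      Polynomial.smult (col_gram (Qproj (transpose_mat C) R * transpose_mat C) W)
        (\<Sum>T | T \<subseteq> {0..<dB} \<and> card T = k.
          Polynomial.smult (col_gram (Qproj B S * B) T) (pTW (S \<union> T) (R \<union> W) A B C)))"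
proof -
  have dims: "dim_row (C * Pproj C R) = nC" "dim_col (Qproj B S * B) = dB" using B C by auto
  show ?thesis
    unfolding Pkr_def dims det_rows_sub_gram transpose_mult_Pproj[OF C] col_gram_def[symmetric]
  proof (rule sum.cong[OF refl])
    fix W assume "W \<in> {W. W \<subseteq> {0..<nC} \<and> card W = r}"
    then have W: "W \<subseteq> {0..<nC}" by simp
    show "(\<Sum>T | T \<subseteq> {0..<dB} \<and> card T = k.
          Polynomial.smult (col_gram (Qproj (transpose_mat C) R * transpose_mat C) W * col_gram (Qproj B S * B) T)
            (pTW T W (Qproj B S * A * Pproj C R) (Qproj B S * B) (C * Pproj C R))) =
        Polynomial.smult (col_gram (Qproj (transpose_mat C) R * transpose_mat C) W)
          (\<Sum>T | T \<subseteq> {0..<dB} \<and> card T = k.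
            Polynomial.smult (col_gram (Qproj B S * B) T) (pTW (S \<union> T) (R \<union> W) A B C))"
      unfolding smult_sum_distrib smult_smult using pTW_deflate[OF A B C S _ R W] by (intro sum.cong) auto
  qed
qed

lemma Pkr_recursion_cols:
  assumes A: "A \<in> carrier_mat n d" and B: "B \<in> carrier_mat n dB" and C: "C \<in> carrier_mat nC d"
    and S: "S \<subseteq> {0..<dB}" and R: "R \<subseteq> {0..<nC}" and k: "0 < k"
  shows "Pkr k r (Qproj B S * A * Pproj C R) (Qproj B S * B) (C * Pproj C R) =
    Polynomial.smult (1 / real k)
      (\<Sum>i | i \<in> {0..<dB} \<and> vnorm (Qproj B S *\<^sub>v col B i) \<noteq> 0.
        Polynomial.smult ((vnorm (Qproj B S *\<^sub>v col B i))\<^sup>2)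
          (Pkr (k - 1) r (Qproj B (S \<union> {i}) * A * Pproj C R) (Qproj B (S \<union> {i}) * B)
            (C * Pproj C R)))"
proof -
  define G where "G X = (\<Sum>W | W \<subseteq> {0..<nC} \<and> card W = r.
    Polynomial.smult (col_gram (Qproj (transpose_mat C) R * transpose_mat C) W) (pTW X (R \<union> W) A B C))"
    for X
  have expand: "Pkr k' r (Qproj B S' * A * Pproj C R) (Qproj B S' * B) (C * Pproj C R) =
      (\<Sum>T | T \<subseteq> {0..<dB} \<and> card T = k'. Polynomial.smult (col_gram (Qproj B S' * B) T) (G (S' \<union> T)))"
    if "S' \<subseteq> {0..<dB}" for S' k'
    unfolding Pkr_deflated[OF A B C that R] G_def by (rule sum_smult_swap)
  have "Pkr k r (Qproj B S * A * Pproj C R) (Qproj B S * B) (C * Pproj C R) =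
      (\<Sum>T | T \<subseteq> {0..<dB} \<and> card T = k. Polynomial.smult (col_gram (Qproj B S * B) T) (G (S \<union> T)))"
    by (rule expand[OF S])
  also have "\<dots> = Polynomial.smult (1 / real k)
      (\<Sum>i | i \<in> {0..<dB} \<and> vnorm (Qproj B S *\<^sub>v col B i) \<noteq> 0.
        Polynomial.smult ((vnorm (Qproj B S *\<^sub>v col B i))\<^sup>2)
          (\<Sum>T | T \<subseteq> {0..<dB} \<and> card T = k - 1.
            Polynomial.smult (col_gram (Qproj B (S \<union> {i}) * B) T) (G (S \<union> {i} \<union> T))))"
    by (rule sum_col_gram_deflate[OF B S k])
  also have "\<dots> = Polynomial.smult (1 / real k)
      (\<Sum>i | i \<in> {0..<dB} \<and> vnorm (Qproj B S *\<^sub>v col B i) \<noteq> 0.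
        Polynomial.smult ((vnorm (Qproj B S *\<^sub>v col B i))\<^sup>2)
          (Pkr (k - 1) r (Qproj B (S \<union> {i}) * A * Pproj C R) (Qproj B (S \<union> {i}) * B)
            (C * Pproj C R)))"
    using S by (intro arg_cong[where f = "Polynomial.smult _"] sum.cong refl) (simp add: expand)
  finally show ?thesis .
qed

lemma transpose_Pproj_mult_row:
  assumes C: "C \<in> carrier_mat nC d" and i: "i < nC"
  shows "transpose_mat (Pproj C R) *\<^sub>v row C i =
    Qproj (transpose_mat C) R *\<^sub>v col (transpose_mat C) i"
  using C i by (simp add: Pproj_symmetric Pproj_eq_Qproj_transpose Qproj_symmetric)

lemma Pkr_recursion_rows:
  assumes A: "A \<in> carrier_mat n d" and B: "B \<in> carrier_mat n dB" and C: "C \<in> carrier_mat nC d"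
    and S: "S \<subseteq> {0..<dB}" and R: "R \<subseteq> {0..<nC}" and r: "0 < r"
  shows "Pkr k r (Qproj B S * A * Pproj C R) (Qproj B S * B) (C * Pproj C R) =
    Polynomial.smult (1 / real r)
      (\<Sum>i | i \<in> {0..<nC} \<and> vnorm (transpose_mat (Pproj C R) *\<^sub>v row C i) \<noteq> 0.
        Polynomial.smult ((vnorm (transpose_mat (Pproj C R) *\<^sub>v row C i))\<^sup>2)
          (Pkr k (r - 1) (Qproj B S * A * Pproj C (R \<union> {i})) (Qproj B S * B)
            (C * Pproj C (R \<union> {i}))))"
proof -
  define Ct where "Ct = transpose_mat C"
  have Ct: "Ct \<in> carrier_mat d nC" unfolding Ct_def using C by simp
  define H where "H Y = (\<Sum>T | T \<subseteq> {0..<dB} \<and> card T = k.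
    Polynomial.smult (col_gram (Qproj B S * B) T) (pTW (S \<union> T) Y A B C))" for Y
  have expand: "Pkr k r' (Qproj B S * A * Pproj C R') (Qproj B S * B) (C * Pproj C R') =
      (\<Sum>W | W \<subseteq> {0..<nC} \<and> card W = r'. Polynomial.smult (col_gram (Qproj Ct R' * Ct) W) (H (R' \<union> W)))"
    if "R' \<subseteq> {0..<nC}" for R' r'
    unfolding Pkr_deflated[OF A B C S that] H_def Ct_def ..
  have "Pkr k r (Qproj B S * A * Pproj C R) (Qproj B S * B) (C * Pproj C R) =
      (\<Sum>W | W \<subseteq> {0..<nC} \<and> card W = r. Polynomial.smult (col_gram (Qproj Ct R * Ct) W) (H (R \<union> W)))"
    by (rule expand[OF R])
  also have "\<dots> = Polynomial.smult (1 / real r)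
      (\<Sum>i | i \<in> {0..<nC} \<and> vnorm (Qproj Ct R *\<^sub>v col Ct i) \<noteq> 0.
        Polynomial.smult ((vnorm (Qproj Ct R *\<^sub>v col Ct i))\<^sup>2)
          (\<Sum>W | W \<subseteq> {0..<nC} \<and> card W = r - 1.
            Polynomial.smult (col_gram (Qproj Ct (R \<union> {i}) * Ct) W) (H (R \<union> {i} \<union> W))))"
    by (rule sum_col_gram_deflate[OF Ct R r])
  also have "\<dots> = Polynomial.smult (1 / real r)
      (\<Sum>i | i \<in> {0..<nC} \<and> vnorm (transpose_mat (Pproj C R) *\<^sub>v row C i) \<noteq> 0.
        Polynomial.smult ((vnorm (transpose_mat (Pproj C R) *\<^sub>v row C i))\<^sup>2)
          (Pkr k (r - 1) (Qproj B S * A * Pproj C (R \<union> {i})) (Qproj B S * B)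
            (C * Pproj C (R \<union> {i}))))"
  proof -
    have set: "{i. i \<in> {0..<nC} \<and> vnorm (Qproj Ct R *\<^sub>v col Ct i) \<noteq> 0} =
        {i. i \<in> {0..<nC} \<and> vnorm (transpose_mat (Pproj C R) *\<^sub>v row C i) \<noteq> 0}"
      using transpose_Pproj_mult_row[OF C] unfolding Ct_def by auto
    show ?thesis unfolding set
    proof (intro arg_cong[where f = "Polynomial.smult _"] sum.cong refl)
      fix i assume "i \<in> {i. i \<in> {0..<nC} \<and> vnorm (transpose_mat (Pproj C R) *\<^sub>v row C i) \<noteq> 0}"
      then have i: "i < nC" by simp
      have Ri: "R \<union> {i} \<subseteq> {0..<nC}" using R i by auto
      show "Polynomial.smult ((vnorm (Qproj Ct R *\<^sub>v col Ct i))\<^sup>2)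
          (\<Sum>W | W \<subseteq> {0..<nC} \<and> card W = r - 1.
            Polynomial.smult (col_gram (Qproj Ct (R \<union> {i}) * Ct) W) (H (R \<union> {i} \<union> W))) =
        Polynomial.smult ((vnorm (transpose_mat (Pproj C R) *\<^sub>v row C i))\<^sup>2)
          (Pkr k (r - 1) (Qproj B S * A * Pproj C (R \<union> {i})) (Qproj B S * B) (C * Pproj C (R \<union> {i})))"
        unfolding expand[OF Ri] transpose_Pproj_mult_row[OF C i] Ct_def ..
    qed
  qed
  finally show ?thesis .
qed

theorem proposition3p6:
  fixes A B C :: "real mat" and n d dB nC k r l t :: nat and S R :: "nat set"
  assumes "A \<in> carrier_mat n d" and "B \<in> carrier_mat n dB" and "C \<in> carrier_mat nC d"
    and "1 \<le> k" and "k \<le> mrank B" and "1 \<le> r" and "r \<le> mrank C"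
    and "S \<subseteq> {0..<dB}" and "card S = l" and "l \<le> k - 1"
    and "R \<subseteq> {0..<nC}" and "card R = t" and "t \<le> r - 1"
  shows
    "Pkr (k - l) (r - t) (Qproj B S * A * Pproj C R) (Qproj B S * B) (C * Pproj C R) =
       Polynomial.smult (1 / real (k - l))
         (\<Sum>i | i \<in> {0..<dB} \<and> vnorm (Qproj B S *\<^sub>v col B i) \<noteq> 0.
            Polynomial.smult ((vnorm (Qproj B S *\<^sub>v col B i))\<^sup>2)
              (Pkr (k - l - 1) (r - t) (Qproj B (S \<union> {i}) * A * Pproj C R)
                   (Qproj B (S \<union> {i}) * B) (C * Pproj C R)))
     \<and>
     Pkr (k - l) (r - t) (Qproj B S * A * Pproj C R) (Qproj B S * B) (C * Pproj C R) =
       Polynomial.smult (1 / real (r - t))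
         (\<Sum>i | i \<in> {0..<nC} \<and> vnorm (transpose_mat (Pproj C R) *\<^sub>v row C i) \<noteq> 0.
            Polynomial.smult ((vnorm (transpose_mat (Pproj C R) *\<^sub>v row C i))\<^sup>2)
              (Pkr (k - l) (r - t - 1) (Qproj B S * A * Pproj C (R \<union> {i}))
                   (Qproj B S * B) (C * Pproj C (R \<union> {i}))))"
proof -
  have k: "0 < k - l" and r: "0 < r - t" using assms(4,6,10,13) by auto
  show ?thesis
    using Pkr_recursion_cols[OF assms(1-3,8,11) k] Pkr_recursion_rows[OF assms(1-3,8,11) r]
    by (rule conjI)
qed

end
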